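(* Let $M=\{r=0\}$ be a smooth hypersurface in $\mathbb C^n$ through $0$ and let $\zeta$ be a formal curve with $\zeta(0)=0$. Then $\zeta^*r\sim0$ if and only if there exists $U\in\mathcal M_0$ which is a weak limit of matrices in $\mathcal M_1$ such that $\zeta^*\varphi\sim0$ for every $\varphi\in I(h,f-Ug,U^*f-g)$.
   Context: $r$ is a real $\mathcal C^\infty$ defining function ($r(0)=0$, $dr(0)\neq0$). Order the nonzero multi-indices $J\in\mathbb N^n$ by $J<K$ iff $|J|<|K|$, or $|J|=|K|$ and $J$ precedes $K$ lexicographically; enumerate them as $J^{(1)},J^{(2)},\dots$. Write the formal Taylor series of $r$ at $0$ as $r\sim 2\,\mathrm{Re}\,h+4\,\mathrm{Re}\sum_{J}\sum_{K\ge J}a_{JK}z^J\bar z^K$ ($J,K$ nonzero), $h$ formal holomorphic with $h(0)=0$. Set $f_J=z^J+\sum_{K\ge J}\overline{a_{JK}}z^K$, $g_J=z^J-\sum_{K\ge J}\overline{a_{JK}}z^K$, so $r\sim2\,\mathrm{Re}\,h+\sum_J|f_J|^2-\sum_J|g_J|^2$; $f=(f_{J^{(m)}})_m$, $g=(g_{J^{(m)}})_m$. $\mathcal M_0$ is the set of infinite complex matrices $\{a_{ij}\}_{i,j\ge1}$ with all row and column sums $\sum_j|a_{ij}|^2\le1$, $\sum_i|a_{ij}|^2\le1$; $\mathcal M_1\subset\mathcal M_0$ the unitary matrices; $A^*=\{\overline{a_{ji}}\}$; weak convergence is entrywise convergence. $(Ug)_i=\sum_mU_{im}g_m$, $(U^*f)_i=\sum_m\overline{U_{mi}}f_m$.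 $I(h,f-Ug,U^*f-g)$ is the ideal of the formal power series ring ${}_n\mathcal O_0$ generated by $h$ and all components of $f-Ug$ and $U^*f-g$. A formal curve is an $n$-tuple of formal power series in $t$; $\zeta^*\varphi=\varphi\circ\zeta$, and $\sim0$ means vanishing to infinite order (all coefficients zero). *)

theory Defs
  imports Complex_Main "HOL-Computational_Algebra.Formal_Power_Series"
begin

text \<open>Multi-indices in N^n are functions 'n => nat, where the finite linearly
ordered type 'n indexes the coordinates z_1,...,z_n of C^n.
Formal power series in z (holomorphic) are functions from multi-indices to complex;
formal series in (z, conj z) are functions of pairs of multi-indices
(coefficient of z^J conj(z)^K).\<close>

type_synonym 'n mi = "'n \<Rightarrow> nat"
type_synonym 'n fser = "'n mi \<Rightarrow> complex"

definition mi_zero :: "'n mi" where "mi_zero = (\<lambda>_. 0)"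

definition mi_deg :: "('n::finite) mi \<Rightarrow> nat" where
  "mi_deg J = (\<Sum>i\<in>UNIV. J i)"

definition mi_lex :: "('n::linorder) mi \<Rightarrow> 'n mi \<Rightarrow> bool" where
  "mi_lex J K \<longleftrightarrow> (\<exists>i. J i < K i \<and> (\<forall>j<i. J j = K j))"

definition mi_less :: "('n::{finite,linorder}) mi \<Rightarrow> 'n mi \<Rightarrow> bool" where
  "mi_less J K \<longleftrightarrow> mi_deg J < mi_deg K \<or> (mi_deg J = mi_deg K \<and> mi_lex J K)"

definition mi_le :: "('n::{finite,linorder}) mi \<Rightarrow> 'n mi \<Rightarrow> bool" where
  "mi_le J K \<longleftrightarrow> J = K \<or> mi_less J K"

text \<open>Enumeration of the nonzero multi-indices in increasing order:
enumJ m is J^(m+1) of the paper (indices shifted to start at 0).\<close>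
definition enumJ :: "nat \<Rightarrow> ('n::{finite,linorder}) mi" where
  "enumJ m = (THE J. J \<noteq> mi_zero \<and> card {K. K \<noteq> mi_zero \<and> mi_less K J} = m)"

text \<open>Coefficient of z^J conj(z)^K in 2 Re h + 4 Re sum_{0<J<=K} a_JK z^J conj(z)^K.\<close>
definition repr_coeff ::
  "('n::{finite,linorder}) fser \<Rightarrow> ('n mi \<Rightarrow> 'n mi \<Rightarrow> complex) \<Rightarrow> 'n mi \<Rightarrow> 'n mi \<Rightarrow> complex" where
  "repr_coeff h a J K =
     (if K = mi_zero then h J else 0) + (if J = mi_zero then cnj (h K) else 0) +
     (if J \<noteq> mi_zero \<and> K \<noteq> mi_zero then
        (if J = K then 2 * a J J + 2 * cnj (a J J)
         else if mi_less J K then 2 * a J K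
         else if mi_less K J then 2 * cnj (a K J) else 0)
      else 0)"

definition fJ :: "('n mi \<Rightarrow> 'n mi \<Rightarrow> complex) \<Rightarrow> ('n::{finite,linorder}) mi \<Rightarrow> 'n fser" where
  "fJ a J = (\<lambda>K. (if K = J then 1 else 0) + (if mi_le J K then cnj (a J K) else 0))"

definition gJ :: "('n mi \<Rightarrow> 'n mi \<Rightarrow> complex) \<Rightarrow> ('n::{finite,linorder}) mi \<Rightarrow> 'n fser" where
  "gJ a J = (\<lambda>K. (if K = J then 1 else 0) - (if mi_le J K then cnj (a J K) else 0))"

text \<open>Infinite matrices, indexed from 0.\<close>
type_synonym imat = "nat \<Rightarrow> nat \<Rightarrow> complex"

definition M0 :: "imat set" where
  "M0 = {A. (\<forall>i. summable (\<lambda>j. (cmod (A i j))\<^sup>2) \<and> (\<Sum>j. (cmod (A i j))\<^sup>2) \<le> 1) \<and>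
            (\<forall>j. summable (\<lambda>i. (cmod (A i j))\<^sup>2) \<and> (\<Sum>i. (cmod (A i j))\<^sup>2) \<le> 1)}"

definition mat_adj :: "imat \<Rightarrow> imat" where
  "mat_adj A = (\<lambda>i j. cnj (A j i))"

definition mat_mult :: "imat \<Rightarrow> imat \<Rightarrow> imat" where
  "mat_mult A B = (\<lambda>i k. \<Sum>j. A i j * B j k)"

definition mat_id :: imat where
  "mat_id = (\<lambda>i j. if i = j then 1 else 0)"

definition M1 :: "imat set" where
  "M1 = {U \<in> M0. mat_mult U (mat_adj U) = mat_id \<and> mat_mult (mat_adj U) U = mat_id}"

definition weak_limit_M1 :: "imat \<Rightarrow> bool" where
  "weak_limit_M1 U \<longleftrightarrow> (\<exists>Us. (\<forall>k. Us k \<in> M1) \<and> (\<forall>i j. (\<lambda>k. Us k i j) \<longlonglongrightarrow> U i j))"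

text \<open>Components of f - U g and U^* f - g (coefficientwise; each coefficient is a finite sum).\<close>
definition fUg :: "('n mi \<Rightarrow> 'n mi \<Rightarrow> complex) \<Rightarrow> imat \<Rightarrow> nat \<Rightarrow> ('n::{finite,linorder}) fser" where
  "fUg a U i = (\<lambda>K. fJ a (enumJ i) K - (\<Sum>m. U i m * gJ a (enumJ m) K))"

definition Ufg :: "('n mi \<Rightarrow> 'n mi \<Rightarrow> complex) \<Rightarrow> imat \<Rightarrow> nat \<Rightarrow> ('n::{finite,linorder}) fser" where
  "Ufg a U i = (\<lambda>K. (\<Sum>m. cnj (U m i) * fJ a (enumJ m) K) - gJ a (enumJ i) K)"

definition fser_mult :: "('n::finite) fser \<Rightarrow> 'n fser \<Rightarrow> 'n fser" where
  "fser_mult p q = (\<lambda>K. \<Sum>J\<in>{J. \<forall>i. J i \<le> K i}. p J * q (\<lambda>i. K i - J i))"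

definition fser_ideal :: "('n::finite) fser set \<Rightarrow> 'n fser set" where
  "fser_ideal G = {\<phi>. \<exists>S p. finite S \<and> S \<subseteq> G \<and> \<phi> = (\<lambda>K. \<Sum>q\<in>S. fser_mult (p q) q K)}"

definition curve_mono :: "('n::finite \<Rightarrow> complex fps) \<Rightarrow> 'n mi \<Rightarrow> complex fps" where
  "curve_mono \<zeta> J = (\<Prod>i\<in>UNIV. (\<zeta> i) ^ (J i))"

definition pull_hol :: "('n::finite \<Rightarrow> complex fps) \<Rightarrow> 'n fser \<Rightarrow> complex fps" where
  "pull_hol \<zeta> \<phi> = Abs_fps (\<lambda>k. \<Sum>J\<in>{J. mi_deg J \<le> k}. \<phi> J * fps_nth (curve_mono \<zeta> J) k)"

text \<open>Pullback of a formal series in (z, conj z): coefficient of t^a conj(t)^b.\<close>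
definition pull_real :: "('n::finite \<Rightarrow> complex fps) \<Rightarrow> ('n mi \<Rightarrow> 'n mi \<Rightarrow> complex) \<Rightarrow> nat \<Rightarrow> nat \<Rightarrow> complex" where
  "pull_real \<zeta> c a b = (\<Sum>J\<in>{J. mi_deg J \<le> a}. \<Sum>K\<in>{K. mi_deg K \<le> b}.
      c J K * fps_nth (curve_mono \<zeta> J) a * cnj (fps_nth (curve_mono \<zeta> K) b))"

definition mi_unit :: "'n \<Rightarrow> 'n mi" where
  "mi_unit i = (\<lambda>j. if j = i then 1 else 0)"

end

theory Submission
  imports Defs "HOL-Analysis.Analysis" "HOL-Library.Diagonal_Subsequence"
begin

text \<open>
  Write r = 2 Re h + sum_J |f_J|^2 - sum_J |g_J|^2. Pulling back along a formal curve zeta through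
  the origin, the coefficient of t^x conj(t)^y of zeta^* r is a finite expression: the J of degree
  above x + y do not contribute. Collect the k-th Taylor coefficients of zeta^* f_J and zeta^* g_J,
  indexed by the enumeration J^(1), J^(2), ..., into finitely supported sequences F_k and G_k. Then
  zeta^* r = 0 iff zeta^* h = 0 and the families (G_k) and (F_k) have the same Gram matrix.
  On the other side, since pulling back is a ring homomorphism, zeta annihilates the ideal
  I(h, f - U g, U^* f - g) iff it annihilates the generators, i.e. iff zeta^* h = 0 and
  U G_k = F_k, U^* F_k = G_k for all k ("U intertwines G and F").

  The theorem thus reduces to linear algebra: two finitely supported families have the same Gram
  matrix iff some U in M0 that is a weak limit of unitary matrices intertwines them. One direction
  is a computation; for the other, reflections I + alpha w w^* build unitary matrices of finite size
  mapping the first n vectors correctly, their extensions by the identity are unitary infinite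
  matrices, and a diagonal subsequence converges entrywise to the required U.
\<close>

section \<open>Multi-indices: degree, order and enumeration\<close>

definition deg_le :: "nat \<Rightarrow> ('n::finite) mi set" where
  "deg_le d = {J. mi_deg J \<le> d}"

definition nz_deg_le :: "nat \<Rightarrow> ('n::finite) mi set" where
  "nz_deg_le d = {J. J \<noteq> mi_zero \<and> mi_deg J \<le> d}"

definition mi_rank :: "('n::{finite,linorder}) mi \<Rightarrow> nat" where
  "mi_rank J = card {K. K \<noteq> mi_zero \<and> mi_less K J}"

lemma mi_deg_ge: "J i \<le> mi_deg (J::('n::finite) mi)"
  unfolding mi_deg_def by (rule member_le_sum) auto

lemma mi_deg_eq0: "mi_deg (J::('n::finite) mi) = 0 \<longleftrightarrow> J = mi_zero"
  unfolding mi_deg_def mi_zero_def by (auto simp: fun_eq_iff)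

lemma mi_deg_zero: "mi_deg (mi_zero :: ('n::finite) mi) = 0"
  by (simp add: mi_deg_eq0)

lemma mi_deg_mono: "(\<And>i. J i \<le> L i) \<Longrightarrow> mi_deg J \<le> mi_deg (L::('n::finite) mi)"
  unfolding mi_deg_def by (rule sum_mono) auto

lemma mi_deg_add: "mi_deg (\<lambda>i. J i + K i) = mi_deg J + mi_deg (K::('n::finite) mi)"
  unfolding mi_deg_def by (simp add: sum.distrib)

lemma finite_deg_le: "finite (deg_le d :: ('n::finite) mi set)"
proof -
  have "deg_le d \<subseteq> {f::'n mi. \<forall>x. (x \<in> UNIV \<longrightarrow> f x \<in> {..d}) \<and> (x \<notin> UNIV \<longrightarrow> f x = 0)}"
    unfolding deg_le_def using mi_deg_ge order_trans by fastforce
  moreover have "finite {f::'n mi. \<forall>x. (x \<in> UNIV \<longrightarrow> f x \<in> {..d}) \<and> (x \<notin> UNIV \<longrightarrow> f x = 0)}"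
    by (rule finite_set_of_finite_funs) auto
  ultimately show ?thesis by (rule finite_subset)
qed

lemma finite_nz_deg_le: "finite (nz_deg_le d :: ('n::finite) mi set)"
  by (rule finite_subset[OF _ finite_deg_le[of d]]) (auto simp: nz_deg_le_def deg_le_def)

lemma finite_below: "finite {J. \<forall>i. J i \<le> (L::('n::finite) mi) i}"
  by (rule finite_subset[OF _ finite_deg_le[of "mi_deg L"]]) (auto simp: deg_le_def intro: mi_deg_mono)

lemma deg_le_0: "deg_le 0 = {mi_zero :: ('n::finite) mi}"
  unfolding deg_le_def using mi_deg_eq0 by auto

lemma nz_deg_le_0: "nz_deg_le 0 = ({} :: ('n::finite) mi set)"
  unfolding nz_deg_le_def using mi_deg_eq0 by auto

lemma card_nz_deg_le_mono: "d \<le> e \<Longrightarrow> card (nz_deg_le d :: ('n::finite) mi set) \<le> card (nz_deg_le e :: 'n mi set)"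
  by (rule card_mono[OF finite_nz_deg_le]) (auto simp: nz_deg_le_def)

lemma mi_lex_trans: "mi_lex J K \<Longrightarrow> mi_lex K L \<Longrightarrow> mi_lex J L"
  unfolding mi_lex_def
proof (elim exE conjE)
  fix i j assume a: "J i < K i" "\<forall>k<i. J k = K k" "K j < L j" "\<forall>k<j. K k = L k"
  show "\<exists>i. J i < L i \<and> (\<forall>j<i. J j = L j)"
  proof (cases i j rule: linorder_cases)
    case less thus ?thesis using a by (intro exI[of _ i]) auto
  next
    case equal thus ?thesis using a by (intro exI[of _ i]) auto
  next
    case greater thus ?thesis using a by (intro exI[of _ j]) auto
  qed
qed

lemma mi_lex_total: "J \<noteq> (K::('n::{finite,linorder}) mi) \<Longrightarrow> mi_lex J K \<or> mi_lex K J"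
proof -
  assume "J \<noteq> K"
  define m where "m = Min {i. J i \<noteq> K i}"
  have fin: "finite {i. J i \<noteq> K i}" by simp
  have "{i. J i \<noteq> K i} \<noteq> {}" using \<open>J \<noteq> K\<close> by (auto simp: fun_eq_iff)
  hence m1: "J m \<noteq> K m" using Min_in[OF fin] unfolding m_def by blast
  have m2: "\<forall>j<m. J j = K j" unfolding m_def using Min_le[OF fin] leD by blast
  show ?thesis
  proof (cases "J m < K m")
    case True thus ?thesis using m2 unfolding mi_lex_def by blast
  next
    case False
    hence "K m < J m" using m1 by simp
    thus ?thesis using m2 unfolding mi_lex_def by metis
  qed
qed

lemma mi_less_irrefl: "\<not> mi_less J (J::('n::{finite,linorder}) mi)"
  by (simp add: mi_less_def mi_lex_def)

lemma mi_less_trans: "mi_less J K \<Longrightarrow> mi_less K L \<Longrightarrow> mi_less J (L::('n::{finite,linorder}) mi)"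
  unfolding mi_less_def by (auto intro: mi_lex_trans)

lemma mi_less_total: "J \<noteq> (K::('n::{finite,linorder}) mi) \<Longrightarrow> mi_less J K \<or> mi_less K J"
  using mi_lex_total[of J K] unfolding mi_less_def by (cases "mi_deg J" "mi_deg K" rule: linorder_cases) auto

lemma mi_less_asym: "mi_less J K \<Longrightarrow> \<not> mi_less K (J::('n::{finite,linorder}) mi)"
  using mi_less_trans mi_less_irrefl by blast

lemma mi_less_deg: "mi_less J K \<Longrightarrow> mi_deg J \<le> mi_deg K"
  unfolding mi_less_def by auto

lemma mi_le_deg: "mi_le J K \<Longrightarrow> mi_deg J \<le> mi_deg K"
  unfolding mi_le_def using mi_less_deg by auto

lemma mi_le_zero: "J \<noteq> mi_zero \<Longrightarrow> \<not> mi_le J (mi_zero::('n::{finite,linorder}) mi)"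
  using mi_le_deg[of J mi_zero] mi_deg_eq0[of J] mi_deg_eq0[of "mi_zero::'n mi"] by auto

lemma mi_rank_mono:
  assumes "mi_less J K" "J \<noteq> mi_zero" shows "mi_rank J < mi_rank (K::('n::{finite,linorder}) mi)"
proof -
  let ?A = "{K'. K' \<noteq> mi_zero \<and> mi_less K' J}" and ?B = "{K'. K' \<noteq> mi_zero \<and> mi_less K' K}"
  have "?B \<subseteq> nz_deg_le (mi_deg K)" unfolding nz_deg_le_def using mi_less_deg by auto
  hence fin: "finite ?B" using finite_nz_deg_le finite_subset by blast
  have "?A \<subseteq> ?B" using mi_less_trans[OF _ assms(1)] by blast
  moreover have "J \<in> ?B" "J \<notin> ?A" using assms mi_less_irrefl by auto
  ultimately have "?A \<subset> ?B" by blast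
  thus ?thesis unfolding mi_rank_def by (rule psubset_card_mono[OF fin])
qed

lemma mi_rank_inj:
  assumes "J \<noteq> mi_zero" "K \<noteq> mi_zero" "mi_rank J = mi_rank K" shows "J = (K::('n::{finite,linorder}) mi)"
proof (rule ccontr)
  assume "J \<noteq> K"
  hence "mi_less J K \<or> mi_less K J" by (rule mi_less_total)
  thus False using mi_rank_mono[of J K] mi_rank_mono[of K J] assms by auto
qed

lemma mi_rank_less: "(J::('n::{finite,linorder}) mi) \<in> nz_deg_le d \<Longrightarrow> mi_rank J < card (nz_deg_le d :: 'n mi set)"
proof -
  assume J: "J \<in> nz_deg_le d"
  have "{K. K \<noteq> mi_zero \<and> mi_less K J} \<subseteq> nz_deg_le d - {J}"
    using J mi_less_deg mi_less_irrefl unfolding nz_deg_le_def by fastforce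
  hence "mi_rank J \<le> card (nz_deg_le d - {J})" unfolding mi_rank_def
    by (intro card_mono) (auto simp: finite_nz_deg_le)
  also have "\<dots> < card (nz_deg_le d :: 'n mi set)" by (rule card_Diff1_less[OF finite_nz_deg_le J])
  finally show ?thesis .
qed

lemma mi_rank_bij:
  "bij_betw (mi_rank :: ('n::{finite,linorder}) mi \<Rightarrow> nat) (nz_deg_le d) {..<card (nz_deg_le d :: 'n mi set)}"
proof -
  have inj: "inj_on mi_rank (nz_deg_le d :: 'n mi set)"
    using mi_rank_inj unfolding inj_on_def nz_deg_le_def by blast
  have sub: "mi_rank ` (nz_deg_le d :: 'n mi set) \<subseteq> {..<card (nz_deg_le d :: 'n mi set)}"
    using mi_rank_less by auto
  have "card (mi_rank ` (nz_deg_le d :: 'n mi set)) = card {..<card (nz_deg_le d :: 'n mi set)}"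
    using card_image[OF inj] by simp
  hence "mi_rank ` (nz_deg_le d :: 'n mi set) = {..<card (nz_deg_le d :: 'n mi set)}"
    using card_subset_eq[OF _ sub] by simp
  thus ?thesis using inj unfolding bij_betw_def by simp
qed

text \<open>There are at least d nonzero multi-indices of degree at most d (the powers of one variable),
  so every rank is attained.\<close>
lemma card_nz_deg_le_ge: "d \<le> card (nz_deg_le d :: ('n::finite) mi set)"
proof -
  fix i0 :: 'n
  define e where "e = (\<lambda>k::nat. (\<lambda>i::'n. if i = i0 then k else 0))"
  have deg: "mi_deg (e k) = k" for k unfolding mi_deg_def e_def by (simp add: sum.delta)
  have inj: "inj_on e {1..d}"
  proof (rule inj_onI)
    fix x y assume "e x = e y"
    hence "e x i0 = e y i0" by simp
    thus "x = y" by (simp add: e_def)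
  qed
  have "e k \<in> nz_deg_le d" if "k \<in> {1..d}" for k
    using that deg[of k] mi_deg_eq0[of "e k"] by (auto simp: nz_deg_le_def)
  hence "e ` {1..d} \<subseteq> nz_deg_le d" by blast
  from card_inj_on_le[OF inj this finite_nz_deg_le] show ?thesis by simp
qed

lemma enumJ_spec: "(enumJ m :: ('n::{finite,linorder}) mi) \<noteq> mi_zero \<and> mi_rank (enumJ m :: 'n mi) = m"
proof -
  have "m < card (nz_deg_le (Suc m) :: 'n mi set)" using card_nz_deg_le_ge[of "Suc m", where 'n='n] by simp
  then obtain J :: "'n mi" where "J \<in> nz_deg_le (Suc m)" "mi_rank J = m"
    using mi_rank_bij[of "Suc m"] unfolding bij_betw_def by (metis imageE lessThan_iff)
  hence ex: "\<exists>!J::'n mi. J \<noteq> mi_zero \<and> mi_rank J = m"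
    using mi_rank_inj unfolding nz_deg_le_def by blast
  show ?thesis unfolding enumJ_def mi_rank_def[symmetric] using theI'[OF ex] by simp
qed

lemma enumJ_nz: "enumJ m \<noteq> mi_zero"
  using enumJ_spec by blast

lemma enumJ_mi_rank: "J \<noteq> mi_zero \<Longrightarrow> enumJ (mi_rank J) = (J::('n::{finite,linorder}) mi)"
  using mi_rank_inj enumJ_spec by metis

lemma enumJ_deg_le:
  "mi_deg (enumJ m :: ('n::{finite,linorder}) mi) \<le> d \<longleftrightarrow> m < card (nz_deg_le d :: 'n mi set)"
proof
  assume "mi_deg (enumJ m :: 'n mi) \<le> d"
  hence "(enumJ m :: 'n mi) \<in> nz_deg_le d" using enumJ_nz unfolding nz_deg_le_def by blast
  from mi_rank_less[OF this] show "m < card (nz_deg_le d :: 'n mi set)" by (simp add: enumJ_spec)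
next
  assume "m < card (nz_deg_le d :: 'n mi set)"
  then obtain J :: "'n mi" where J: "J \<in> nz_deg_le d" "mi_rank J = m"
    using mi_rank_bij[of d] unfolding bij_betw_def by (metis imageE lessThan_iff)
  hence "enumJ m = J" using enumJ_mi_rank[of J] unfolding nz_deg_le_def by auto
  thus "mi_deg (enumJ m :: 'n mi) \<le> d" using J unfolding nz_deg_le_def by auto
qed

lemma enumJ_deg_gt:
  "card (nz_deg_le k :: ('n::{finite,linorder}) mi set) \<le> m \<Longrightarrow> k < mi_deg (enumJ m :: 'n mi)"
  using enumJ_deg_le[of m k, where 'n='n] by (meson not_le)

lemma enumJ_bij:
  "bij_betw enumJ {..<card (nz_deg_le d :: ('n::{finite,linorder}) mi set)} (nz_deg_le d :: 'n mi set)"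
proof (rule bij_betw_imageI)
  show "inj_on (enumJ :: nat \<Rightarrow> 'n mi) {..<card (nz_deg_le d :: 'n mi set)}"
    by (rule inj_onI) (metis enumJ_spec)
  have "J \<in> enumJ ` {..<card (nz_deg_le d :: 'n mi set)}" if J: "J \<in> nz_deg_le d" for J :: "'n mi"
  proof
    show "J = enumJ (mi_rank J)" using J enumJ_mi_rank[of J] unfolding nz_deg_le_def by simp
    show "mi_rank J \<in> {..<card (nz_deg_le d :: 'n mi set)}" using mi_rank_less[OF J] by simp
  qed
  moreover have "enumJ m \<in> (nz_deg_le d :: 'n mi set)" if "m < card (nz_deg_le d :: 'n mi set)" for m
    using that enumJ_nz enumJ_deg_le unfolding nz_deg_le_def by blast
  ultimately show "(enumJ :: nat \<Rightarrow> 'n mi) ` {..<card (nz_deg_le d :: 'n mi set)} = nz_deg_le d"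
    by blast
qed

section \<open>Pulling formal power series back along a formal curve\<close>

lemma curve_mono_add:
  "curve_mono \<zeta> (\<lambda>i. J i + K i) = curve_mono \<zeta> J * curve_mono \<zeta> (K::('n::finite) mi)"
  unfolding curve_mono_def by (simp add: power_add prod.distrib)

lemma curve_mono_zero: "curve_mono \<zeta> (mi_zero::('n::finite) mi) = 1"
  unfolding curve_mono_def mi_zero_def by simp

lemma fps_mult_low:
  fixes f g :: "'a::comm_ring_1 fps"
  assumes "\<forall>j<a. fps_nth f j = 0" "\<forall>j<b. fps_nth g j = 0"
  shows "\<forall>j<a+b. fps_nth (f*g) j = 0"
proof (intro allI impI)
  fix j assume j: "j < a + b"
  have "fps_nth f i * fps_nth g (j - i) = 0" if "i \<in> {0..j}" for i
    using assms that j by (cases "i < a") auto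
  thus "fps_nth (f*g) j = 0" by (simp add: fps_mult_nth)
qed

lemma fps_prod_low:
  fixes F :: "'b \<Rightarrow> 'a::comm_ring_1 fps"
  assumes "finite S" "\<forall>i\<in>S. \<forall>j<e i. fps_nth (F i) j = 0"
  shows "\<forall>j<(\<Sum>i\<in>S. e i). fps_nth (\<Prod>i\<in>S. F i) j = 0"
  using assms
proof (induction S rule: finite_induct)
  case empty thus ?case by simp
next
  case (insert x S)
  thus ?case using fps_mult_low[of "e x" "F x" "sum e S" "prod F S"] by simp
qed

lemma curve_mono_low:
  assumes "\<forall>i. fps_nth (\<zeta> i) 0 = 0" "k < mi_deg J"
  shows "fps_nth (curve_mono \<zeta> (J::('n::finite) mi)) k = 0"
proof -
  have low: "\<forall>j<m. fps_nth ((\<zeta> i) ^ m) j = 0" for i m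
  proof (induction m)
    case (Suc m)
    thus ?case using fps_mult_low[of 1 "\<zeta> i" m "(\<zeta> i) ^ m"] assms(1) by simp
  qed simp
  have "\<forall>j<(\<Sum>i\<in>UNIV. J i). fps_nth (\<Prod>i\<in>UNIV. (\<zeta> i) ^ (J i)) j = 0"
    by (rule fps_prod_low) (use low in auto)
  thus ?thesis using assms(2) unfolding curve_mono_def mi_deg_def by simp
qed

lemma pull_hol_nth:
  "fps_nth (pull_hol \<zeta> \<phi>) k = (\<Sum>J\<in>deg_le k. \<phi> J * fps_nth (curve_mono \<zeta> J) k)"
  unfolding pull_hol_def deg_le_def by simp

lemma pull_hol_nth_0: "fps_nth (pull_hol \<zeta> \<phi>) 0 = \<phi> (mi_zero::('n::finite) mi)"
  unfolding pull_hol_nth deg_le_0 by (simp add: curve_mono_zero)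

lemma pull_hol_nth_vanish:
  "(\<And>J. mi_deg J \<le> k \<Longrightarrow> \<phi> J = 0) \<Longrightarrow> fps_nth (pull_hol \<zeta> (\<phi>::('n::finite) fser)) k = 0"
  unfolding pull_hol_nth by (rule sum.neutral) (auto simp: deg_le_def)

lemma pull_hol_nth_superset:
  assumes c0: "\<forall>i. fps_nth (\<zeta> i) 0 = 0" and T: "finite T" "deg_le k \<subseteq> T"
  shows "fps_nth (pull_hol \<zeta> \<phi>) k = (\<Sum>J\<in>T. \<phi> J * fps_nth (curve_mono \<zeta> (J::('n::finite) mi)) k)"
  unfolding pull_hol_nth
proof (rule sum.mono_neutral_left[OF T], intro ballI)
  fix J assume "J \<in> T - deg_le k"
  hence "k < mi_deg J" unfolding deg_le_def by auto
  thus "\<phi> J * fps_nth (curve_mono \<zeta> J) k = 0" using curve_mono_low[OF c0] by simp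
qed

lemma pull_hol_sum: "pull_hol \<zeta> (\<lambda>K. \<Sum>q\<in>S. F q K) = (\<Sum>q\<in>S. pull_hol \<zeta> (F q))"
  by (rule fps_ext) (simp add: fps_sum_nth pull_hol_nth sum_distrib_right sum.swap[of _ S])

definition pairs_deg_le :: "nat \<Rightarrow> (('n::finite) mi \<times> 'n mi) set" where
  "pairs_deg_le k = {(J,K). mi_deg J + mi_deg K \<le> k}"

lemma pull_hol_times_nth:
  fixes \<zeta> :: "('n::finite) \<Rightarrow> complex fps"
  assumes c0: "\<forall>i. fps_nth (\<zeta> i) 0 = 0"
  shows "fps_nth (pull_hol \<zeta> p * pull_hol \<zeta> q) k =
    (\<Sum>(J,K)\<in>pairs_deg_le k. p J * q K * fps_nth (curve_mono \<zeta> (\<lambda>i. J i + K i)) k)"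
    (is "_ = (\<Sum>(J,K)\<in>_. ?t J K)")
proof -
  let ?T = "deg_le k :: 'n mi set"
  let ?c = "\<lambda>J i. fps_nth (curve_mono \<zeta> J) i"
  have fT: "finite ?T" by (rule finite_deg_le)
  have "fps_nth (pull_hol \<zeta> p * pull_hol \<zeta> q) k
      = (\<Sum>i=0..k. (\<Sum>J\<in>?T. p J * ?c J i) * (\<Sum>K\<in>?T. q K * ?c K (k-i)))"
    unfolding fps_mult_nth
    by (intro sum.cong refl arg_cong2[where f=times] pull_hol_nth_superset[OF c0 fT])
       (auto simp: deg_le_def)
  also have "\<dots> = (\<Sum>i=0..k. \<Sum>J\<in>?T. \<Sum>K\<in>?T. p J * q K * (?c J i * ?c K (k-i)))"
    by (simp add: sum_product mult_ac)
  also have "\<dots> = (\<Sum>J\<in>?T. \<Sum>K\<in>?T. \<Sum>i=0..k. p J * q K * (?c J i * ?c K (k-i)))"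
    by (subst sum.swap) (rule sum.cong[OF refl], rule sum.swap)
  also have "\<dots> = (\<Sum>J\<in>?T. \<Sum>K\<in>?T. ?t J K)"
    by (simp add: curve_mono_add fps_mult_nth sum_distrib_left)
  also have "\<dots> = (\<Sum>(J,K)\<in>?T \<times> ?T. ?t J K)"
    by (rule sum.cartesian_product)
  also have "\<dots> = (\<Sum>(J,K)\<in>pairs_deg_le k. ?t J K)"
  proof (rule sum.mono_neutral_right)
    show "pairs_deg_le k \<subseteq> ?T \<times> ?T" by (auto simp: pairs_deg_le_def deg_le_def)
    show "\<forall>x\<in>?T \<times> ?T - pairs_deg_le k. (case x of (J,K) \<Rightarrow> ?t J K) = 0"
    proof clarify
      fix J K :: "'n mi" assume "(J, K) \<notin> pairs_deg_le k"
      hence "k < mi_deg (\<lambda>i. J i + K i)" by (simp add: pairs_deg_le_def mi_deg_add)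
      thus "?t J K = 0" using curve_mono_low[OF c0] by simp
    qed
  qed (use fT in simp)
  finally show ?thesis .
qed

text \<open>The same sum computes the pullback of the formal product, regrouped by L = J + K.\<close>
lemma pull_hol_fser_mult_nth:
  "fps_nth (pull_hol \<zeta> (fser_mult p q)) k =
    (\<Sum>(J,K)\<in>pairs_deg_le k. p J * q K * fps_nth (curve_mono \<zeta> (\<lambda>i. J i + (K::('n::finite) mi) i)) k)"
proof -
  let ?P = "\<lambda>J. fps_nth (curve_mono \<zeta> J) k"
  have "fps_nth (pull_hol \<zeta> (fser_mult p q)) k =
      (\<Sum>L\<in>deg_le k. \<Sum>J\<in>{J. \<forall>i. J i \<le> L i}. p J * q (\<lambda>i. L i - J i) * ?P L)"
    unfolding pull_hol_nth fser_mult_def by (simp add: sum_distrib_right)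
  also have "\<dots> = (\<Sum>(L,J)\<in>Sigma (deg_le k) (\<lambda>L. {J. \<forall>i. J i \<le> L i}). p J * q (\<lambda>i. L i - J i) * ?P L)"
    by (rule sum.Sigma) (simp_all add: finite_deg_le finite_below)
  also have "\<dots> = (\<Sum>(J,K)\<in>pairs_deg_le k. p J * q K * ?P (\<lambda>i. J i + K i))"
  proof (rule sum.reindex_bij_witness[where i="\<lambda>(J,K). ((\<lambda>i. J i + K i), J)" and j="\<lambda>(L,J). (J, (\<lambda>i. L i - J i))"])
    fix x assume "x \<in> Sigma (deg_le k :: 'n mi set) (\<lambda>L. {J. \<forall>i. J i \<le> L i})"
    then obtain L J where x: "x = (L,J)" and le: "\<forall>i. J i \<le> L i" and L: "mi_deg L \<le> k"
      by (auto simp: deg_le_def)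
    have eqL: "(\<lambda>i. J i + (L i - J i)) = L" using le by (auto simp: fun_eq_iff)
    have "mi_deg J + mi_deg (\<lambda>i. L i - J i) = mi_deg L" by (metis eqL mi_deg_add)
    thus "(case case x of (L, J) \<Rightarrow> (J, \<lambda>i. L i - J i) of (J, K) \<Rightarrow> (\<lambda>i. J i + K i, J)) = x"
      using x eqL by simp
    show "(case x of (L, J) \<Rightarrow> (J, \<lambda>i. L i - J i)) \<in> pairs_deg_le k"
      using x L \<open>mi_deg J + _ = _\<close> by (simp add: pairs_deg_le_def)
    show "(case case x of (L, J) \<Rightarrow> (J, \<lambda>i. L i - J i) of (J, K) \<Rightarrow> p J * q K * ?P (\<lambda>i. J i + K i)) =
          (case x of (L, J) \<Rightarrow> p J * q (\<lambda>i. L i - J i) * ?P L)"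
      using x eqL by simp
  next
    fix y assume y: "y \<in> pairs_deg_le k"
    show "(case case y of (J, K) \<Rightarrow> (\<lambda>i. J i + K i, J) of (L, J) \<Rightarrow> (J, \<lambda>i. L i - J i)) = y"
      by (cases y) simp
    show "(case y of (J, K) \<Rightarrow> (\<lambda>i. J i + K i, J)) \<in> Sigma (deg_le k) (\<lambda>L. {J. \<forall>i. J i \<le> L i})"
      using y by (auto simp: pairs_deg_le_def deg_le_def mi_deg_add)
  qed
  finally show ?thesis .
qed

lemma pull_hol_mult:
  assumes "\<forall>i. fps_nth (\<zeta> i) 0 = 0"
  shows "pull_hol \<zeta> (fser_mult p q) = pull_hol \<zeta> p * pull_hol \<zeta> (q::('n::finite) fser)"
  by (rule fps_ext) (simp only: pull_hol_fser_mult_nth pull_hol_times_nth[OF assms])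

definition fser_one :: "('n::finite) fser" where
  "fser_one = (\<lambda>J. if J = mi_zero then 1 else 0)"

lemma fser_mult_one: "fser_mult fser_one q = (q::('n::finite) fser)"
proof
  fix K :: "'n mi"
  have "fser_mult fser_one q K = (\<Sum>J\<in>{J. \<forall>i. J i \<le> K i}. if J = mi_zero then q (\<lambda>i. K i - J i) else 0)"
    unfolding fser_mult_def fser_one_def by (rule sum.cong) auto
  also have "\<dots> = q K" using finite_below[of K] by (simp add: sum.delta mi_zero_def)
  finally show "fser_mult fser_one q K = q K" .
qed

lemma pull_hol_one: "pull_hol \<zeta> (fser_one :: ('n::finite) fser) = 1"
proof (rule fps_ext)
  fix k
  have "fps_nth (pull_hol \<zeta> (fser_one :: 'n fser)) k =
      (\<Sum>J\<in>deg_le k. if J = mi_zero then fps_nth (curve_mono \<zeta> J) k else 0)"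
    unfolding pull_hol_nth fser_one_def by (rule sum.cong) auto
  also have "\<dots> = fps_nth (curve_mono \<zeta> (mi_zero :: 'n mi)) k"
    by (subst sum.delta[OF finite_deg_le]) (simp add: deg_le_def mi_deg_zero)
  also have "\<dots> = fps_nth 1 k" by (simp add: curve_mono_zero)
  finally show "fps_nth (pull_hol \<zeta> (fser_one :: 'n fser)) k = fps_nth 1 k" .
qed

lemma generator_in_fser_ideal: "q \<in> G \<Longrightarrow> q \<in> fser_ideal (G::('n::finite) fser set)"
  unfolding fser_ideal_def
  by (rule CollectI, rule exI[of _ "{q}"], rule exI[of _ "\<lambda>_. fser_one"]) (simp add: fser_mult_one)

lemma pull_hol_ideal_vanishes_iff:
  assumes c0: "\<forall>i. fps_nth (\<zeta> i) 0 = 0"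
  shows "(\<forall>\<phi>\<in>fser_ideal G. pull_hol \<zeta> \<phi> = 0) \<longleftrightarrow> (\<forall>q\<in>(G::('n::finite) fser set). pull_hol \<zeta> q = 0)"
proof
  assume G: "\<forall>q\<in>G. pull_hol \<zeta> q = 0"
  show "\<forall>\<phi>\<in>fser_ideal G. pull_hol \<zeta> \<phi> = 0"
  proof
    fix \<phi> assume "\<phi> \<in> fser_ideal G"
    then obtain S p where S: "S \<subseteq> G" "\<phi> = (\<lambda>K. \<Sum>q\<in>S. fser_mult (p q) q K)"
      unfolding fser_ideal_def by blast
    have "pull_hol \<zeta> \<phi> = (\<Sum>q\<in>S. pull_hol \<zeta> (p q) * pull_hol \<zeta> q)"
      unfolding S(2) pull_hol_sum by (simp add: pull_hol_mult[OF c0])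
    thus "pull_hol \<zeta> \<phi> = 0" using S(1) G by (auto intro!: sum.neutral)
  qed
qed (use generator_in_fser_ideal in blast)

section \<open>The pullback of r as a difference of two sums of squares\<close>

lemma pull_real_cong:
  "(\<And>J K. mi_deg J \<le> x \<Longrightarrow> mi_deg K \<le> y \<Longrightarrow> c J K = c' J K) \<Longrightarrow>
    pull_real \<zeta> c x y = pull_real \<zeta> c' x y"
  unfolding pull_real_def by (intro sum.cong refl) auto

lemma pull_real_add:
  "pull_real \<zeta> (\<lambda>J K. c J K + c' J K) x y = pull_real \<zeta> c x y + pull_real \<zeta> c' x y"
  unfolding pull_real_def by (simp add: distrib_right sum.distrib)

lemma pull_real_diff:
  "pull_real \<zeta> (\<lambda>J K. c J K - c' J K) x y = pull_real \<zeta> c x y - pull_real \<zeta> c' x y"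
  unfolding pull_real_def by (simp add: left_diff_distrib sum_subtractf)

lemma pull_real_sum:
  "pull_real \<zeta> (\<lambda>J K. \<Sum>L\<in>S. c L J K) x y = (\<Sum>L\<in>S. pull_real \<zeta> (c L) x y)"
  unfolding pull_real_def by (simp add: sum_distrib_right sum.swap[of _ S])

lemma pull_real_tensor:
  "pull_real \<zeta> (\<lambda>J K. u J * cnj (v K)) x y = fps_nth (pull_hol \<zeta> u) x * cnj (fps_nth (pull_hol \<zeta> v) y)"
  unfolding pull_real_def pull_hol_nth deg_le_def
  by (simp add: sum_product mult_ac)

lemma fJ_gJ_vanish:
  assumes "mi_deg K < mi_deg L"
  shows "fJ a L (K::('n::{finite,linorder}) mi) = 0" "gJ a L K = 0"
  using assms mi_le_deg[of L K] unfolding fJ_def gJ_def by auto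

text \<open>The coefficients of the representation of r, with the three cases J = K, J < K, K < J
  merged via the non-strict order.\<close>
lemma repr_coeff_mi_le:
  "repr_coeff h a J (K::('n::{finite,linorder}) mi) =
     (if K = mi_zero then h J else 0) + (if J = mi_zero then cnj (h K) else 0) +
     (if J \<noteq> mi_zero \<and> K \<noteq> mi_zero then
        (if mi_le J K then 2 * a J K else 0) + (if mi_le K J then 2 * cnj (a K J) else 0) else 0)"
proof (cases "J = K")
  case False
  hence "mi_less J K \<or> mi_less K J" by (rule mi_less_total)
  thus ?thesis unfolding repr_coeff_def mi_le_def using False mi_less_asym by auto
qed (simp add: repr_coeff_def mi_le_def)

text \<open>The coefficient form of r = 2 Re h + sum |f_L|^2 - sum |g_L|^2: for J, K of degree at most d
  only the finitely many L of degree at most d contribute.\<close>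
lemma repr_coeff_sum_squares:
  fixes J K :: "('n::{finite,linorder}) mi"
  assumes J: "mi_deg J \<le> d" and K: "mi_deg K \<le> d"
  shows "repr_coeff h a J K = h J * cnj (fser_one K) + fser_one J * cnj (h K) +
    (\<Sum>L\<in>nz_deg_le d. fJ a L J * cnj (fJ a L K) - gJ a L J * cnj (gJ a L K))"
proof -
  define b where "b L K = (if mi_le L K then cnj (a L K) else 0)" for L K :: "'n mi"
  have sq: "fJ a L J * cnj (fJ a L K) - gJ a L J * cnj (gJ a L K) =
      (if L = J then 2 * cnj (b L K) else 0) + (if L = K then 2 * b L J else 0)" for L
    unfolding fJ_def gJ_def b_def[symmetric]
    by (cases "L = J"; cases "L = K") (simp_all add: algebra_simps)
  have "(\<Sum>L\<in>nz_deg_le d. fJ a L J * cnj (fJ a L K) - gJ a L J * cnj (gJ a L K)) =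
      (if J \<in> nz_deg_le d then 2 * cnj (b J K) else 0) + (if K \<in> nz_deg_le d then 2 * b K J else 0)"
    unfolding sq sum.distrib by (simp add: sum.delta[OF finite_nz_deg_le])
  also have "\<dots> = (if J \<noteq> mi_zero \<and> K \<noteq> mi_zero then
        (if mi_le J K then 2 * a J K else 0) + (if mi_le K J then 2 * cnj (a K J) else 0) else 0)"
    using J K mi_le_zero by (auto simp: nz_deg_le_def b_def)
  finally show ?thesis
    unfolding repr_coeff_mi_le fser_one_def by simp
qed

text \<open>The k-th Taylor coefficients of the pullbacks of the f_J and g_J, as sequences indexed by
  the enumeration J^(1), J^(2), ... of the nonzero multi-indices.\<close>
definition fvec :: "('n mi \<Rightarrow> 'n mi \<Rightarrow> complex) \<Rightarrow> (('n::{finite,linorder}) \<Rightarrow> complex fps) \<Rightarrow> nat \<Rightarrow> nat \<Rightarrow> complex" where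
  "fvec a \<zeta> k i = fps_nth (pull_hol \<zeta> (fJ a (enumJ i))) k"

definition gvec :: "('n mi \<Rightarrow> 'n mi \<Rightarrow> complex) \<Rightarrow> (('n::{finite,linorder}) \<Rightarrow> complex fps) \<Rightarrow> nat \<Rightarrow> nat \<Rightarrow> complex" where
  "gvec a \<zeta> k i = fps_nth (pull_hol \<zeta> (gJ a (enumJ i))) k"

definition ip :: "nat \<Rightarrow> (nat \<Rightarrow> complex) \<Rightarrow> (nat \<Rightarrow> complex) \<Rightarrow> complex" where
  "ip M u v = (\<Sum>i<M. u i * cnj (v i))"

definition supported_below :: "(nat \<Rightarrow> nat) \<Rightarrow> (nat \<Rightarrow> nat \<Rightarrow> complex) \<Rightarrow> bool" where
  "supported_below S X \<longleftrightarrow> (\<forall>a i. S a \<le> i \<longrightarrow> X a i = 0)"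

lemma ip_truncate:
  assumes "supported_below S X" "S a \<le> M"
  shows "ip M (X a) v = ip (S a) (X a) v"
  unfolding ip_def using assms by (intro sum.mono_neutral_right) (auto simp: supported_below_def)

text \<open>Only the J^(i) of degree at most k contribute to the k-th coefficients.\<close>
lemma fvec_gvec_supported:
  fixes \<zeta> :: "('n::{finite,linorder}) \<Rightarrow> complex fps"
  shows "supported_below (\<lambda>k. card (nz_deg_le k :: 'n mi set)) (fvec a \<zeta>)"
    and "supported_below (\<lambda>k. card (nz_deg_le k :: 'n mi set)) (gvec a \<zeta>)"
proof -
  have "fJ a (enumJ i) J = 0 \<and> gJ a (enumJ i) J = 0"
    if "card (nz_deg_le k :: 'n mi set) \<le> i" "mi_deg J \<le> k" for k i and J :: "'n mi"
  proof -
    from enumJ_deg_gt[OF that(1)]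
    show ?thesis using fJ_gJ_vanish[OF le_less_trans[OF that(2)]] by simp
  qed
  thus "supported_below (\<lambda>k. card (nz_deg_le k :: 'n mi set)) (fvec a \<zeta>)"
    and "supported_below (\<lambda>k. card (nz_deg_le k :: 'n mi set)) (gvec a \<zeta>)"
    unfolding supported_below_def fvec_def gvec_def by (auto intro: pull_hol_nth_vanish)
qed

text \<open>Pulled back along a curve, r = 2 Re h + sum |f_J|^2 - sum |g_J|^2 becomes a finite identity
  for each coefficient of t^x conj(t)^y: the J^(i) of degree above x + y do not contribute.\<close>
lemma pull_real_gram_form:
  fixes c :: "('n::{finite,linorder}) mi \<Rightarrow> 'n mi \<Rightarrow> complex" and \<zeta> :: "'n \<Rightarrow> complex fps"
  assumes decomp: "\<forall>J K. c J K = repr_coeff h a J K"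
  shows "pull_real \<zeta> c x y =
    (if y = 0 then fps_nth (pull_hol \<zeta> h) x else 0) + (if x = 0 then cnj (fps_nth (pull_hol \<zeta> h) y) else 0) +
    ip (card (nz_deg_le (x+y) :: 'n mi set)) (fvec a \<zeta> x) (fvec a \<zeta> y) -
    ip (card (nz_deg_le (x+y) :: 'n mi set)) (gvec a \<zeta> x) (gvec a \<zeta> y)"
proof -
  let ?N = "nz_deg_le (x+y) :: 'n mi set"
  let ?sq = "\<lambda>L J K. fJ a L J * cnj (fJ a L K) - gJ a L J * cnj (gJ a L K)"
  have "pull_real \<zeta> c x y = pull_real \<zeta>
      (\<lambda>J K. h J * cnj (fser_one K) + fser_one J * cnj (h K) + (\<Sum>L\<in>?N. ?sq L J K)) x y"
    by (rule pull_real_cong) (simp add: decomp repr_coeff_sum_squares)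
  also have "\<dots> = fps_nth (pull_hol \<zeta> h) x * cnj (fps_nth (pull_hol \<zeta> fser_one) y) +
      fps_nth (pull_hol \<zeta> fser_one) x * cnj (fps_nth (pull_hol \<zeta> h) y) +
      (\<Sum>L\<in>?N. fps_nth (pull_hol \<zeta> (fJ a L)) x * cnj (fps_nth (pull_hol \<zeta> (fJ a L)) y) -
               fps_nth (pull_hol \<zeta> (gJ a L)) x * cnj (fps_nth (pull_hol \<zeta> (gJ a L)) y))"
    by (simp only: pull_real_add pull_real_sum pull_real_diff pull_real_tensor)
  also have "(\<Sum>L\<in>?N. fps_nth (pull_hol \<zeta> (fJ a L)) x * cnj (fps_nth (pull_hol \<zeta> (fJ a L)) y) -
               fps_nth (pull_hol \<zeta> (gJ a L)) x * cnj (fps_nth (pull_hol \<zeta> (gJ a L)) y)) =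
      ip (card ?N) (fvec a \<zeta> x) (fvec a \<zeta> y) - ip (card ?N) (gvec a \<zeta> x) (gvec a \<zeta> y)"
    unfolding ip_def fvec_def gvec_def sum_subtractf[symmetric]
    by (rule sum.reindex_bij_betw[OF enumJ_bij, symmetric])
  finally show ?thesis by (simp add: pull_hol_one)
qed

definition same_gram :: "(nat \<Rightarrow> nat) \<Rightarrow> (nat \<Rightarrow> nat \<Rightarrow> complex) \<Rightarrow> (nat \<Rightarrow> nat \<Rightarrow> complex) \<Rightarrow> bool" where
  "same_gram S X Y \<longleftrightarrow> (\<forall>a b. ip (S a) (X a) (X b) = ip (S a) (Y a) (Y b))"

lemma pull_real_vanishes_iff:
  fixes c :: "('n::{finite,linorder}) mi \<Rightarrow> 'n mi \<Rightarrow> complex" and \<zeta> :: "'n \<Rightarrow> complex fps"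
  assumes decomp: "\<forall>J K. c J K = repr_coeff h a J K" and h_zero: "h mi_zero = 0"
  shows "(\<forall>x y. pull_real \<zeta> c x y = 0) \<longleftrightarrow>
    pull_hol \<zeta> h = 0 \<and> same_gram (\<lambda>k. card (nz_deg_le k :: 'n mi set)) (gvec a \<zeta>) (fvec a \<zeta>)"
proof -
  let ?S = "\<lambda>k. card (nz_deg_le k :: 'n mi set)"
  let ?F = "fvec a \<zeta>" and ?G = "gvec a \<zeta>"
  note form = pull_real_gram_form[OF decomp, where \<zeta>=\<zeta>]
  have trunc: "ip (?S (x+y)) (?F x) (?F y) = ip (?S x) (?F x) (?F y)"
    "ip (?S (x+y)) (?G x) (?G y) = ip (?S x) (?G x) (?G y)" for x y
    by (rule ip_truncate[OF fvec_gvec_supported(1)] ip_truncate[OF fvec_gvec_supported(2)];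
        rule card_nz_deg_le_mono; simp)+
  have h0: "fps_nth (pull_hol \<zeta> h) 0 = 0" by (simp add: pull_hol_nth_0 h_zero)
  have "?F 0 i = 0" "?G 0 i = 0" for i
    using fvec_gvec_supported[of a \<zeta>] unfolding supported_below_def by (auto simp: nz_deg_le_0)
  hence pull_h: "pull_real \<zeta> c x 0 = fps_nth (pull_hol \<zeta> h) x" for x
    using form[of x 0] h0 by (simp add: ip_def)
  show ?thesis
  proof
    assume vanish: "\<forall>x y. pull_real \<zeta> c x y = 0"
    have hk: "fps_nth (pull_hol \<zeta> h) k = 0" for k using vanish pull_h[of k] by simp
    hence ph: "pull_hol \<zeta> h = 0" by (intro fps_ext) simp
    have "pull_real \<zeta> c x y = ip (?S x) (?F x) (?F y) - ip (?S x) (?G x) (?G y)" for x y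
      unfolding form trunc by (simp add: hk)
    hence "ip (?S x) (?F x) (?F y) = ip (?S x) (?G x) (?G y)" for x y
      using vanish by (metis eq_iff_diff_eq_0)
    hence "same_gram ?S ?G ?F" unfolding same_gram_def by simp
    thus "pull_hol \<zeta> h = 0 \<and> same_gram ?S ?G ?F" using ph by simp
  next
    assume "pull_hol \<zeta> h = 0 \<and> same_gram ?S ?G ?F"
    thus "\<forall>x y. pull_real \<zeta> c x y = 0" using form trunc by (simp add: same_gram_def)
  qed
qed

section \<open>The pullbacks of the generators f - Ug and U^* f - g\<close>

text \<open>U intertwines the families X and Y: it maps each X a to Y a, and its adjoint maps Y a back
  to X a. The sums run over {..<S a}, which contains the supports of X a and Y a in the
  applications.\<close>
definition intertwines :: "(nat \<Rightarrow> nat) \<Rightarrow> imat \<Rightarrow> (nat \<Rightarrow> nat \<Rightarrow> complex) \<Rightarrow> (nat \<Rightarrow> nat \<Rightarrow> complex) \<Rightarrow> bool" where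
  "intertwines S U X Y \<longleftrightarrow>
     (\<forall>a i. (\<Sum>m<S a. U i m * X a m) = Y a i \<and> (\<Sum>m<S a. cnj (U m i) * Y a m) = X a i)"

lemma suminf_enumJ_truncate:
  fixes F :: "('n::{finite,linorder}) mi \<Rightarrow> 'n fser"
  assumes F: "\<And>L K. mi_deg K < mi_deg L \<Longrightarrow> F L K = 0" and K: "mi_deg K \<le> k"
  shows "(\<Sum>m. w m * F (enumJ m) K) = (\<Sum>m<card (nz_deg_le k :: 'n mi set). w m * F (enumJ m) K)"
proof -
  have "w m * F (enumJ m) K = 0" if "m \<notin> {..<card (nz_deg_le k :: 'n mi set)}" for m
    using that K F[OF le_less_trans[OF K enumJ_deg_gt]] by simp
  with sums_finite[of "{..<card (nz_deg_le k :: 'n mi set)}" "\<lambda>m. w m * F (enumJ m) K"]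
  show ?thesis by (simp add: sums_iff)
qed

lemma pull_fUg_nth:
  fixes a :: "('n::{finite,linorder}) mi \<Rightarrow> 'n mi \<Rightarrow> complex"
  shows "fps_nth (pull_hol \<zeta> (fUg a U i)) k =
    fvec a \<zeta> k i - (\<Sum>m<card (nz_deg_le k :: 'n mi set). U i m * gvec a \<zeta> k m)"
proof -
  let ?N = "card (nz_deg_le k :: 'n mi set)"
  let ?c = "\<lambda>K. fps_nth (curve_mono \<zeta> K) k"
  have trunc: "(\<Sum>m. U i m * gJ a (enumJ m) K) = (\<Sum>m<?N. U i m * gJ a (enumJ m) K)"
    if "mi_deg K \<le> k" for K
    using suminf_enumJ_truncate[OF fJ_gJ_vanish(2) that] .
  have "fps_nth (pull_hol \<zeta> (fUg a U i)) k =
      (\<Sum>K\<in>deg_le k. fJ a (enumJ i) K * ?c K) - (\<Sum>K\<in>deg_le k. \<Sum>m<?N. U i m * (gJ a (enumJ m) K * ?c K))"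
    unfolding pull_hol_nth fUg_def sum_subtractf[symmetric]
    by (intro sum.cong refl)
       (simp add: trunc deg_le_def right_diff_distrib sum_distrib_left mult_ac)
  also have "(\<Sum>K\<in>deg_le k. \<Sum>m<?N. U i m * (gJ a (enumJ m) K * ?c K)) =
      (\<Sum>m<?N. U i m * (\<Sum>K\<in>deg_le k. gJ a (enumJ m) K * ?c K))"
    by (subst sum.swap) (simp add: sum_distrib_left)
  finally show ?thesis unfolding fvec_def gvec_def pull_hol_nth .
qed

lemma pull_Ufg_nth:
  fixes a :: "('n::{finite,linorder}) mi \<Rightarrow> 'n mi \<Rightarrow> complex"
  shows "fps_nth (pull_hol \<zeta> (Ufg a U i)) k =
    (\<Sum>m<card (nz_deg_le k :: 'n mi set). cnj (U m i) * fvec a \<zeta> k m) - gvec a \<zeta> k i"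
proof -
  let ?N = "card (nz_deg_le k :: 'n mi set)"
  let ?c = "\<lambda>K. fps_nth (curve_mono \<zeta> K) k"
  have trunc: "(\<Sum>m. cnj (U m i) * fJ a (enumJ m) K) = (\<Sum>m<?N. cnj (U m i) * fJ a (enumJ m) K)"
    if "mi_deg K \<le> k" for K
    using suminf_enumJ_truncate[OF fJ_gJ_vanish(1) that] .
  have "fps_nth (pull_hol \<zeta> (Ufg a U i)) k =
      (\<Sum>K\<in>deg_le k. \<Sum>m<?N. cnj (U m i) * (fJ a (enumJ m) K * ?c K)) - (\<Sum>K\<in>deg_le k. gJ a (enumJ i) K * ?c K)"
    unfolding pull_hol_nth Ufg_def sum_subtractf[symmetric]
    by (intro sum.cong refl)
       (simp add: trunc deg_le_def right_diff_distrib sum_distrib_left mult_ac)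
  also have "(\<Sum>K\<in>deg_le k. \<Sum>m<?N. cnj (U m i) * (fJ a (enumJ m) K * ?c K)) =
      (\<Sum>m<?N. cnj (U m i) * (\<Sum>K\<in>deg_le k. fJ a (enumJ m) K * ?c K))"
    by (subst sum.swap) (simp add: sum_distrib_left)
  finally show ?thesis unfolding fvec_def gvec_def pull_hol_nth .
qed

lemma pull_generators_vanish_iff:
  fixes a :: "('n::{finite,linorder}) mi \<Rightarrow> 'n mi \<Rightarrow> complex" and \<zeta> :: "'n \<Rightarrow> complex fps"
  shows "(\<forall>q\<in>{h} \<union> range (fUg a U) \<union> range (Ufg a U). pull_hol \<zeta> q = 0) \<longleftrightarrow>
    pull_hol \<zeta> h = 0 \<and> intertwines (\<lambda>k. card (nz_deg_le k :: 'n mi set)) U (gvec a \<zeta>) (fvec a \<zeta>)"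
proof -
  have "(\<forall>i. pull_hol \<zeta> (fUg a U i) = 0) \<and> (\<forall>i. pull_hol \<zeta> (Ufg a U i) = 0) \<longleftrightarrow>
      intertwines (\<lambda>k. card (nz_deg_le k :: 'n mi set)) U (gvec a \<zeta>) (fvec a \<zeta>)"
    unfolding intertwines_def fps_eq_iff pull_fUg_nth pull_Ufg_nth by auto
  thus ?thesis by blast
qed

section \<open>Unitary matrices of finite size\<close>

text \<open>Matrices and vectors are infinite, but here only the indices below M are used.\<close>
definition mm :: "nat \<Rightarrow> imat \<Rightarrow> imat \<Rightarrow> imat" where
  "mm M A B = (\<lambda>i k. \<Sum>j<M. A i j * B j k)"

definition mv :: "nat \<Rightarrow> imat \<Rightarrow> (nat \<Rightarrow> complex) \<Rightarrow> (nat \<Rightarrow> complex)" where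
  "mv M A x = (\<lambda>i. \<Sum>j<M. A i j * x j)"

definition unitary_upto :: "nat \<Rightarrow> imat \<Rightarrow> bool" where
  "unitary_upto M A \<longleftrightarrow>
     (\<forall>i<M. \<forall>k<M. mm M A (mat_adj A) i k = mat_id i k \<and> mm M (mat_adj A) A i k = mat_id i k)"

lemma mat_id_mult1: "mat_id i j * (y::complex) = (if i = j then y else 0)"
  unfolding mat_id_def by simp

lemma mat_id_mult2: "(y::complex) * mat_id i j = (if i = j then y else 0)"
  unfolding mat_id_def by simp

lemma mm_id_left: "i < M \<Longrightarrow> mm M mat_id A i k = A i k"
  unfolding mm_def by (simp add: mat_id_mult1 sum.delta)

lemma mv_id: "i < M \<Longrightarrow> mv M mat_id x i = x i"
  unfolding mv_def by (simp add: mat_id_mult1 sum.delta)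

lemma mv_mm: "mv M (mm M A B) x i = mv M A (mv M B x) i"
proof -
  have "mv M (mm M A B) x i = (\<Sum>j<M. \<Sum>l<M. A i l * B l j * x j)"
    unfolding mv_def mm_def by (simp add: sum_distrib_right)
  also have "\<dots> = (\<Sum>l<M. \<Sum>j<M. A i l * B l j * x j)" by (rule sum.swap)
  also have "\<dots> = mv M A (mv M B x) i"
    unfolding mv_def by (simp add: sum_distrib_left mult_ac)
  finally show ?thesis .
qed

lemma mm_assoc: "mm M (mm M X Y) Z i k = mm M X (mm M Y Z) i k"
proof -
  have "mm M (mm M X Y) Z i k = (\<Sum>l<M. \<Sum>j<M. X i j * Y j l * Z l k)"
    unfolding mm_def by (simp add: sum_distrib_right)
  also have "\<dots> = (\<Sum>j<M. \<Sum>l<M. X i j * Y j l * Z l k)" by (rule sum.swap)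
  also have "\<dots> = mm M X (mm M Y Z) i k" unfolding mm_def by (simp add: sum_distrib_left mult_ac)
  finally show ?thesis .
qed

lemma mm_cong_left: "(\<And>j. j < M \<Longrightarrow> X i j = X' i j) \<Longrightarrow> mm M X Y i k = mm M X' Y i k"
  unfolding mm_def by (rule sum.cong) auto

lemma mm_cong_right: "(\<And>j. j < M \<Longrightarrow> Y j k = Y' j k) \<Longrightarrow> mm M X Y i k = mm M X Y' i k"
  unfolding mm_def by (rule sum.cong) auto

lemma mv_cong: "(\<And>j. j < M \<Longrightarrow> x j = y j) \<Longrightarrow> mv M A x i = mv M A y i"
  unfolding mv_def by (rule sum.cong) auto

lemma adj_mm: "mat_adj (mm M A B) = mm M (mat_adj B) (mat_adj A)"
  unfolding mat_adj_def mm_def by (simp add: fun_eq_iff mult.commute)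

lemma adj_adj: "mat_adj (mat_adj A) = A"
  unfolding mat_adj_def by simp

lemma unitary_upto_id: "unitary_upto M mat_id"
proof -
  have "mat_adj mat_id = mat_id" unfolding mat_adj_def mat_id_def by (simp add: fun_eq_iff)
  thus ?thesis unfolding unitary_upto_def using mm_id_left by simp
qed

text \<open>If A A^* = I and B B^* = I then (A B) (A B)^* = A (B B^*) A^* = I.\<close>
lemma mm_adj_eq_id:
  assumes A: "\<forall>i<M. \<forall>k<M. mm M A (mat_adj A) i k = mat_id i k"
    and B: "\<forall>i<M. \<forall>k<M. mm M B (mat_adj B) i k = mat_id i k"
    and ik: "i < M" "k < M"
  shows "mm M (mm M A B) (mat_adj (mm M A B)) i k = mat_id i k"
proof -
  have inner: "mm M B (mm M (mat_adj B) (mat_adj A)) j k = mat_adj A j k" if j: "j < M" for j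
  proof -
    have "mm M B (mm M (mat_adj B) (mat_adj A)) j k = mm M (mm M B (mat_adj B)) (mat_adj A) j k"
      by (simp add: mm_assoc)
    also have "\<dots> = mm M mat_id (mat_adj A) j k"
      by (rule mm_cong_left) (use B j in simp)
    also have "\<dots> = mat_adj A j k" using j by (rule mm_id_left)
    finally show ?thesis .
  qed
  have "mm M (mm M A B) (mat_adj (mm M A B)) i k = mm M A (mm M B (mm M (mat_adj B) (mat_adj A))) i k"
    unfolding adj_mm by (simp add: mm_assoc)
  also have "\<dots> = mm M A (mat_adj A) i k"
    by (rule mm_cong_right) (use inner in simp)
  also have "\<dots> = mat_id i k" using A ik by simp
  finally show ?thesis .
qed

lemma unitary_upto_mm:
  assumes A: "unitary_upto M A" and B: "unitary_upto M B"
  shows "unitary_upto M (mm M A B)"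
proof -
  have "mm M (mat_adj (mm M A B)) (mm M A B) i k = mat_id i k" if "i < M" "k < M" for i k
    using mm_adj_eq_id[of M "mat_adj B" "mat_adj A"] A B that
    unfolding unitary_upto_def adj_mm adj_adj by blast
  thus ?thesis using mm_adj_eq_id[of M A B] A B unfolding unitary_upto_def by blast
qed

lemma ip_cnj: "ip M u v = cnj (ip M v u)"
  unfolding ip_def by (simp add: mult.commute)

lemma ip_cong: "(\<And>j. j < M \<Longrightarrow> u j = u' j) \<Longrightarrow> (\<And>j. j < M \<Longrightarrow> v j = v' j) \<Longrightarrow> ip M u v = ip M u' v'"
  unfolding ip_def by (rule sum.cong) auto

lemma ip_diff_right: "ip M u (\<lambda>i. v i - v' i) = ip M u v - ip M u v'"
  unfolding ip_def by (simp add: algebra_simps sum_subtractf)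

lemma ip_diff_left: "ip M (\<lambda>i. u i - u' i) v = ip M u v - ip M u' v"
  unfolding ip_def by (simp add: algebra_simps sum_subtractf)

lemma ip_self_zero:
  assumes "ip M w w = 0" "i < M" shows "w i = 0"
proof -
  have "ip M w w = of_real (\<Sum>i<M. (cmod (w i))\<^sup>2)"
    unfolding ip_def of_real_sum by (rule sum.cong[OF refl], rule complex_norm_square[symmetric])
  hence "(\<Sum>i<M. (cmod (w i))\<^sup>2) = 0" using assms(1) by (metis of_real_eq_0_iff)
  hence "\<forall>i\<in>{..<M}. (cmod (w i))\<^sup>2 = 0" by (subst sum_nonneg_eq_0_iff[symmetric]) auto
  thus ?thesis using assms(2) by simp
qed

lemma ip_mv_unitary:
  assumes "unitary_upto M A"
  shows "ip M (mv M A u) (mv M A v) = ip M u v"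
proof -
  have AA: "(\<Sum>i<M. A i j * cnj (A i l)) = mat_id j l" if "j < M" "l < M" for j l
  proof -
    have "mm M (mat_adj A) A j l = mat_id j l" using assms that unfolding unitary_upto_def by blast
    hence "cnj (\<Sum>i<M. cnj (A i j) * A i l) = cnj (mat_id j l)" unfolding mm_def mat_adj_def by simp
    thus ?thesis by (simp add: mat_id_def mult.commute)
  qed
  have "ip M (mv M A u) (mv M A v) = (\<Sum>i<M. \<Sum>l<M. \<Sum>j<M. u j * (A i j * (cnj (v l) * cnj (A i l))))"
    unfolding ip_def mv_def by (simp add: sum_distrib_left sum_distrib_right mult_ac)
  also have "\<dots> = (\<Sum>l<M. \<Sum>j<M. \<Sum>i<M. u j * (A i j * (cnj (v l) * cnj (A i l))))"
    by (subst sum.swap) (rule sum.cong[OF refl], rule sum.swap)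
  also have "\<dots> = (\<Sum>j<M. \<Sum>l<M. \<Sum>i<M. u j * (A i j * (cnj (v l) * cnj (A i l))))"
    by (rule sum.swap)
  also have "\<dots> = (\<Sum>j<M. \<Sum>l<M. u j * cnj (v l) * (\<Sum>i<M. A i j * cnj (A i l)))"
    by (simp add: sum_distrib_left mult_ac)
  also have "\<dots> = (\<Sum>j<M. \<Sum>l<M. u j * cnj (v l) * mat_id j l)"
    by (intro sum.cong refl) (simp add: AA)
  also have "\<dots> = ip M u v"
    unfolding ip_def by (simp add: mat_id_mult2 sum.delta)
  finally show ?thesis .
qed

lemma mv_adj_mv:
  assumes "unitary_upto M A" "i < M"
  shows "mv M (mat_adj A) (mv M A x) i = x i"
proof -
  have "mv M (mat_adj A) (mv M A x) i = mv M (mm M (mat_adj A) A) x i" by (simp add: mv_mm)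
  also have "\<dots> = mv M mat_id x i"
    unfolding mv_def using assms unfolding unitary_upto_def by (intro sum.cong) auto
  also have "\<dots> = x i" using assms(2) by (rule mv_id)
  finally show ?thesis .
qed

text \<open>The rank-one perturbation I + alpha w w^* of the identity. For suitable alpha it is unitary
  (a reflection); it fixes every vector orthogonal to w.\<close>
definition rank_one_update :: "complex \<Rightarrow> (nat \<Rightarrow> complex) \<Rightarrow> imat" where
  "rank_one_update \<alpha> w = (\<lambda>i j. mat_id i j + \<alpha> * w i * cnj (w j))"

text \<open>(I + alpha w w^*)(I + beta w w^*) = I + (alpha + beta + alpha beta <w, w>) w w^*, so the
  update is unitary when alpha + conj alpha + |alpha|^2 <w, w> = 0, and it maps x to
  x + alpha <x, w> w.\<close>
lemma rank_one_update_mult: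
  assumes "i < M" "k < M"
  shows "mm M (rank_one_update \<alpha> w) (rank_one_update \<beta> w) i k =
    mat_id i k + (\<alpha> + \<beta> + \<alpha> * \<beta> * ip M w w) * w i * cnj (w k)"
proof -
  have "mm M (rank_one_update \<alpha> w) (rank_one_update \<beta> w) i k =
      (\<Sum>j<M. mat_id i j * mat_id j k) + (\<Sum>j<M. mat_id i j * (\<beta> * w j * cnj (w k)))
     + (\<Sum>j<M. \<alpha> * w i * cnj (w j) * mat_id j k) + (\<Sum>j<M. \<alpha> * \<beta> * w i * cnj (w k) * (w j * cnj (w j)))"
    unfolding mm_def rank_one_update_def by (simp add: sum.distrib[symmetric] algebra_simps)
  also have "\<dots> = mat_id i k + \<beta> * w i * cnj (w k) + \<alpha> * w i * cnj (w k) + \<alpha> * \<beta> * w i * cnj (w k) * ip M w w"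
    using assms unfolding ip_def by (simp add: mat_id_mult1 mat_id_mult2 sum.delta sum.delta' sum_distrib_left)
  finally show ?thesis by (simp add: algebra_simps)
qed

lemma unitary_rank_one_update:
  assumes "\<alpha> + cnj \<alpha> + \<alpha> * cnj \<alpha> * ip M w w = 0"
  shows "unitary_upto M (rank_one_update \<alpha> w)"
proof -
  have adj: "mat_adj (rank_one_update \<alpha> w) = rank_one_update (cnj \<alpha>) w"
    unfolding mat_adj_def rank_one_update_def mat_id_def by (simp add: fun_eq_iff mult_ac)
  have "cnj \<alpha> + \<alpha> + cnj \<alpha> * \<alpha> * ip M w w = 0" using assms by (simp add: algebra_simps)
  thus ?thesis
    unfolding unitary_upto_def adj using rank_one_update_mult assms by simp
qed

lemma rank_one_update_apply:
  assumes "i < M" shows "mv M (rank_one_update \<alpha> w) x i = x i + \<alpha> * ip M x w * w i"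
proof -
  have "mv M (rank_one_update \<alpha> w) x i = (\<Sum>j<M. mat_id i j * x j) + (\<Sum>j<M. \<alpha> * w i * (x j * cnj (w j)))"
    unfolding mv_def rank_one_update_def sum.distrib[symmetric] by (rule sum.cong) (auto simp: algebra_simps)
  also have "(\<Sum>j<M. mat_id i j * x j) = x i" using assms by (simp add: mat_id_mult1 sum.delta)
  also have "(\<Sum>j<M. \<alpha> * w i * (x j * cnj (w j))) = \<alpha> * ip M x w * w i"
    unfolding ip_def by (simp add: sum_distrib_left mult_ac)
  finally show ?thesis .
qed

text \<open>If <x, w> = t is nonzero, the reflection with
  alpha = -1/t does it, since t + conj t = <w, w>; if t = 0 then w = 0.\<close>
lemma reflection_exists:
  assumes norms: "ip M x x = ip M y y"
  shows "\<exists>R. unitary_upto M R \<and> (\<forall>i<M. mv M R x i = y i) \<and>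
    (\<forall>v. ip M v (\<lambda>i. x i - y i) = 0 \<longrightarrow> (\<forall>i<M. mv M R v i = v i))"
proof -
  define w where "w = (\<lambda>i. x i - y i)"
  define t where "t = ip M x w"
  have ww: "ip M w w = t + cnj t"
    unfolding t_def w_def ip_diff_left ip_diff_right using norms ip_cnj[of M x x] ip_cnj[of M y x]
    by simp
  show ?thesis
  proof (cases "t = 0")
    case True
    hence "ip M w w = 0" using ww by simp
    hence "\<forall>i<M. x i = y i" using ip_self_zero unfolding w_def by fastforce
    thus ?thesis using unitary_upto_id mv_id by metis
  next
    case False
    define \<alpha> where "\<alpha> = - 1 / t"
    have "\<alpha> + cnj \<alpha> + \<alpha> * cnj \<alpha> * ip M w w = 0"
      unfolding ww \<alpha>_def using False by (simp add: field_simps)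
    moreover have "mv M (rank_one_update \<alpha> w) x i = y i" if "i < M" for i
      using rank_one_update_apply[OF that, of \<alpha> w x] False unfolding t_def[symmetric]
      by (simp add: \<alpha>_def w_def)
    moreover have "mv M (rank_one_update \<alpha> w) v i = v i" if "ip M v w = 0" "i < M" for v i
      using rank_one_update_apply[OF that(2)] that(1) by simp
    ultimately show ?thesis using unitary_rank_one_update unfolding w_def by blast
  qed
qed

text \<open>Induction on n: after mapping
  the first n vectors, a reflection moves the image of X n to Y n and fixes the Y a with a < n.\<close>
lemma unitary_extension:
  fixes X Y :: "nat \<Rightarrow> nat \<Rightarrow> complex"
  assumes "\<forall>a<n. \<forall>b<n. ip M (Y a) (Y b) = ip M (X a) (X b)"
  shows "\<exists>A. unitary_upto M A \<and> (\<forall>a<n. \<forall>i<M. mv M A (X a) i = Y a i)"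
  using assms
proof (induction n)
  case 0 show ?case using unitary_upto_id by blast
next
  case (Suc n)
  then obtain A where A: "unitary_upto M A" and AX: "\<forall>a<n. \<forall>i<M. mv M A (X a) i = Y a i"
    by (metis less_SucI)
  define x where "x = mv M A (X n)"
  have ip_x: "ip M x (Y b) = ip M (Y n) (Y b)" if "b < n" for b
  proof -
    have "ip M x (Y b) = ip M x (mv M A (X b))" by (rule ip_cong) (use AX that in auto)
    also have "\<dots> = ip M (X n) (X b)" unfolding x_def ip_mv_unitary[OF A] ..
    finally show ?thesis using Suc.prems that by simp
  qed
  have "ip M x x = ip M (Y n) (Y n)" using Suc.prems ip_mv_unitary[OF A] by (simp add: x_def)
  then obtain R where R: "unitary_upto M R" "\<forall>i<M. mv M R x i = Y n i"
    and fix_orth: "\<forall>v. ip M v (\<lambda>i. x i - Y n i) = 0 \<longrightarrow> (\<forall>i<M. mv M R v i = v i)"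
    using reflection_exists[of M x "Y n"] by auto
  have "mv M (mm M R A) (X a) i = Y a i" if "a < Suc n" "i < M" for a i
  proof (cases "a < n")
    case True
    have "ip M (Y a) (\<lambda>i. x i - Y n i) = 0"
      unfolding ip_diff_right using ip_x[OF True] ip_cnj[of M "Y a"] by simp
    thus ?thesis using fix_orth AX True that mv_cong[of M "mv M A (X a)" "Y a" R i]
      by (simp add: mv_mm)
  next
    case False
    thus ?thesis using R(2) that by (simp add: mv_mm x_def less_Suc_eq)
  qed
  thus ?case using unitary_upto_mm[OF R(1) A] by blast
qed

definition embed :: "nat \<Rightarrow> imat \<Rightarrow> imat" where
  "embed M A = (\<lambda>i j. if i < M \<and> j < M then A i j else mat_id i j)"

lemma embed_adj: "mat_adj (embed M A) = embed M (mat_adj A)"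
  unfolding embed_def mat_adj_def mat_id_def by (auto simp: fun_eq_iff)

lemma embed_support: "j \<notin> {..<M} \<union> {i} \<Longrightarrow> embed M A i j = 0"
  unfolding embed_def mat_id_def by auto

lemma suminf_finite_support:
  fixes f :: "nat \<Rightarrow> 'a::{t2_space,topological_comm_monoid_add}"
  shows "finite S \<Longrightarrow> (\<And>j. j \<notin> S \<Longrightarrow> f j = 0) \<Longrightarrow> summable f \<and> suminf f = sum f S"
  using sums_finite[of S f] by (auto simp: sums_iff)

text \<open>If A A^* = I, the rows of the extension of A are orthonormal; only finitely many entries
  of each row are nonzero, so the infinite sums in the product reduce to finite ones.\<close>
lemma embed_mult_entry:
  assumes half: "\<forall>i<M. \<forall>k<M. mm M A (mat_adj A) i k = mat_id i k"
  shows "(\<Sum>j\<in>{..<M} \<union> {i}. embed M A i j * cnj (embed M A k j)) = mat_id i k"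
proof (cases "i < M")
  case True
  hence S: "{..<M} \<union> {i} = {..<M}" by auto
  show ?thesis
  proof (cases "k < M")
    case True
    have "(\<Sum>j\<in>{..<M}. embed M A i j * cnj (embed M A k j)) = mm M A (mat_adj A) i k"
      unfolding mm_def mat_adj_def embed_def using \<open>i < M\<close> True by (intro sum.cong) auto
    thus ?thesis using S half \<open>i < M\<close> True by simp
  next
    case False
    have "(\<Sum>j\<in>{..<M}. embed M A i j * cnj (embed M A k j)) = 0"
      using False by (intro sum.neutral) (auto simp: embed_def mat_id_def)
    thus ?thesis using S False \<open>i < M\<close> by (simp add: mat_id_def)
  qed
next
  case False
  have "(\<Sum>j\<in>{..<M} \<union> {i}. embed M A i j * cnj (embed M A k j)) =
        (\<Sum>j\<in>{..<M}. embed M A i j * cnj (embed M A k j)) + embed M A i i * cnj (embed M A k i)"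
    using False by (subst sum.union_disjoint) auto
  also have "(\<Sum>j\<in>{..<M}. embed M A i j * cnj (embed M A k j)) = 0"
    using False by (intro sum.neutral) (auto simp: embed_def mat_id_def)
  also have "embed M A i i * cnj (embed M A k i) = mat_id i k"
    using False by (auto simp: embed_def mat_id_def)
  finally show ?thesis by simp
qed

lemma embed_mult:
  assumes half: "\<forall>i<M. \<forall>k<M. mm M A (mat_adj A) i k = mat_id i k"
  shows "mat_mult (embed M A) (mat_adj (embed M A)) = mat_id"
proof (intro ext)
  fix i k
  have "mat_mult (embed M A) (mat_adj (embed M A)) i k = (\<Sum>j. embed M A i j * cnj (embed M A k j))"
    unfolding mat_mult_def mat_adj_def by simp
  also have "\<dots> = (\<Sum>j\<in>{..<M} \<union> {i}. embed M A i j * cnj (embed M A k j))"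
    by (rule suminf_finite_support[THEN conjunct2]) (auto simp: embed_support)
  also have "\<dots> = mat_id i k" by (rule embed_mult_entry[OF half])
  finally show "mat_mult (embed M A) (mat_adj (embed M A)) i k = mat_id i k" .
qed

lemma embed_row:
  assumes half: "\<forall>i<M. \<forall>k<M. mm M A (mat_adj A) i k = mat_id i k"
  shows "summable (\<lambda>j. (cmod (embed M A i j))\<^sup>2) \<and> (\<Sum>j. (cmod (embed M A i j))\<^sup>2) = 1"
proof -
  have sm: "summable (\<lambda>j. (cmod (embed M A i j))\<^sup>2) \<and> (\<Sum>j. (cmod (embed M A i j))\<^sup>2) = (\<Sum>j\<in>{..<M} \<union> {i}. (cmod (embed M A i j))\<^sup>2)"
    by (rule suminf_finite_support) (auto simp: embed_support)
  have "complex_of_real (\<Sum>j\<in>{..<M} \<union> {i}. (cmod (embed M A i j))\<^sup>2) = (\<Sum>j\<in>{..<M} \<union> {i}. embed M A i j * cnj (embed M A i j))"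
    unfolding of_real_sum by (rule sum.cong[OF refl], rule complex_norm_square)
  also have "\<dots> = 1" using embed_mult_entry[OF half, of i i] by (simp add: mat_id_def)
  finally have "(\<Sum>j\<in>{..<M} \<union> {i}. (cmod (embed M A i j))\<^sup>2) = 1" by (simp only: of_real_eq_1_iff)
  thus ?thesis using sm by simp
qed

lemma embed_M1:
  assumes U: "unitary_upto M A"
  shows "embed M A \<in> M1"
proof -
  have h1: "\<forall>i<M. \<forall>k<M. mm M A (mat_adj A) i k = mat_id i k" using U unfolding unitary_upto_def by blast
  have h2: "\<forall>i<M. \<forall>k<M. mm M (mat_adj A) (mat_adj (mat_adj A)) i k = mat_id i k"
    using U unfolding unitary_upto_def adj_adj by blast
  have rows: "summable (\<lambda>j. (cmod (embed M A i j))\<^sup>2) \<and> (\<Sum>j. (cmod (embed M A i j))\<^sup>2) = 1" for i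
    by (rule embed_row[OF h1])
  have cols: "summable (\<lambda>i. (cmod (embed M A i j))\<^sup>2) \<and> (\<Sum>i. (cmod (embed M A i j))\<^sup>2) = 1" for j
  proof -
    have e: "cmod (embed M A i j) = cmod (embed M (mat_adj A) j i)" for i
      using embed_adj[of M A] by (metis complex_mod_cnj mat_adj_def)
    show ?thesis unfolding e by (rule embed_row[OF h2])
  qed
  have m0: "embed M A \<in> M0" unfolding M0_def using rows cols by simp
  have p1: "mat_mult (embed M A) (mat_adj (embed M A)) = mat_id" by (rule embed_mult[OF h1])
  have p2: "mat_mult (mat_adj (embed M A)) (mat_adj (mat_adj (embed M A))) = mat_id"
    using embed_mult[OF h2] by (simp add: embed_adj)
  show ?thesis unfolding M1_def using m0 p1 p2 adj_adj by simp
qed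

lemma embed_intertwines:
  assumes A: "unitary_upto M A" and X: "supported_below S X" and Y: "supported_below S Y"
    and SM: "S a \<le> M" and AX: "\<forall>i<M. mv M A (X a) i = Y a i"
  shows "(\<Sum>m<S a. embed M A i m * X a m) = Y a i"
    and "(\<Sum>m<S a. cnj (embed M A m i) * Y a m) = X a i"
proof -
  have zero_out: "(\<Sum>m<S a. embed M A i m * Z m) = 0" "(\<Sum>m<S a. cnj (embed M A m i) * Z m) = 0"
    if "\<not> i < M" for Z
    using that SM by (auto intro!: sum.neutral simp: embed_def mat_id_def)
  have Xa: "(\<Sum>m<S a. B m * X a m) = (\<Sum>m<M. B m * X a m)" and Ya: "(\<Sum>m<S a. B m * Y a m) = (\<Sum>m<M. B m * Y a m)" for B
    using X Y SM unfolding supported_below_def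
    by (auto intro!: sum.mono_neutral_left) (meson not_le)+
  show "(\<Sum>m<S a. embed M A i m * X a m) = Y a i"
  proof (cases "i < M")
    case True
    have "(\<Sum>m<S a. embed M A i m * X a m) = (\<Sum>m<S a. A i m * X a m)"
      unfolding embed_def using True SM by (intro sum.cong) auto
    thus ?thesis using AX True Xa by (simp add: mv_def)
  qed (use zero_out Y SM in \<open>simp add: supported_below_def\<close>)
  show "(\<Sum>m<S a. cnj (embed M A m i) * Y a m) = X a i"
  proof (cases "i < M")
    case True
    have "(\<Sum>m<S a. cnj (embed M A m i) * Y a m) = (\<Sum>m<S a. mat_adj A i m * Y a m)"
      unfolding embed_def mat_adj_def using True SM by (intro sum.cong) auto
    also have "\<dots> = mv M (mat_adj A) (mv M A (X a)) i"
      using Ya AX by (simp add: mv_def)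
    finally show ?thesis using mv_adj_mv[OF A True] by simp
  qed (use zero_out X SM in \<open>simp add: supported_below_def\<close>)
qed

section \<open>Weak limits of unitary matrices\<close>

lemma M0_partial_row:
  assumes "V \<in> M0" shows "(\<Sum>j<L. (cmod (V i j))\<^sup>2) \<le> 1"
proof -
  have "summable (\<lambda>j. (cmod (V i j))\<^sup>2)" "(\<Sum>j. (cmod (V i j))\<^sup>2) \<le> 1"
    using assms unfolding M0_def by auto
  thus ?thesis using sum_le_suminf[of "\<lambda>j. (cmod (V i j))\<^sup>2" "{..<L}"] by simp
qed

lemma M0_partial_col:
  assumes "V \<in> M0" shows "(\<Sum>i<L. (cmod (V i j))\<^sup>2) \<le> 1"
proof -
  have "summable (\<lambda>i. (cmod (V i j))\<^sup>2)" "(\<Sum>i. (cmod (V i j))\<^sup>2) \<le> 1"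
    using assms unfolding M0_def by auto
  thus ?thesis using sum_le_suminf[of "\<lambda>i. (cmod (V i j))\<^sup>2" "{..<L}"] by simp
qed

lemma M0_entry:
  assumes "V \<in> M0" shows "cmod (V i j) \<le> 1"
proof -
  have "(cmod (V i j))\<^sup>2 \<le> (\<Sum>j'<Suc j. (cmod (V i j'))\<^sup>2)"
    by (rule member_le_sum) auto
  also have "\<dots> \<le> 1" using M0_partial_row[OF assms] .
  finally have "(cmod (V i j))\<^sup>2 \<le> 1\<^sup>2" by simp
  thus ?thesis by (rule power2_le_imp_le) simp
qed

text \<open>M0 is closed under entrywise limits: the bounds on partial sums pass to the limit.\<close>
lemma M0_closed_entrywise:
  assumes V: "\<And>k. V k \<in> M0" and lim: "\<And>i j. (\<lambda>k. V k i j) \<longlonglongrightarrow> U i j"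
  shows "U \<in> M0"
proof -
  have bounded: "summable f \<and> suminf f \<le> 1" if "\<And>L. (\<Sum>j<L. f j) \<le> 1" "\<And>j. 0 \<le> f j"
    for f :: "nat \<Rightarrow> real"
    using summableI_nonneg_bounded[of f 1] suminf_le_const[of f 1] that by blast
  have "(\<Sum>j<L. (cmod (U i j))\<^sup>2) \<le> 1" for i L
    by (rule LIMSEQ_le_const2[OF tendsto_sum[OF tendsto_power[OF tendsto_norm[OF lim]]]])
       (use M0_partial_row[OF V] in auto)
  moreover have "(\<Sum>i<L. (cmod (U i j))\<^sup>2) \<le> 1" for j L
    by (rule LIMSEQ_le_const2[OF tendsto_sum[OF tendsto_power[OF tendsto_norm[OF lim]]]])
       (use M0_partial_col[OF V] in auto)
  ultimately show ?thesis unfolding M0_def using bounded by simp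
qed

lemma bounded_conv_subseq:
  fixes z :: "nat \<Rightarrow> complex"
  assumes "\<forall>n. cmod (z n) \<le> 1"
  shows "\<exists>r. strict_mono r \<and> convergent (z \<circ> r)"
proof -
  have sc: "seq_compact (cball (0::complex) 1)" by (rule compact_imp_seq_compact) simp
  have "\<forall>n. z n \<in> cball 0 1" using assms by simp
  then obtain l r where "strict_mono (r :: nat \<Rightarrow> nat)" "(z \<circ> r) \<longlonglongrightarrow> l"
    using seq_compactE[OF sc] by metis
  thus ?thesis unfolding convergent_def by blast
qed

text \<open>A sequence of matrices with uniformly bounded entries has a subsequence converging
  entrywise: a diagonal argument over an enumeration of the entries.\<close>
lemma entrywise_convergent_subseq:
  fixes V :: "nat \<Rightarrow> imat"
  assumes bnd: "\<forall>n i j. cmod (V n i j) \<le> 1"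
  shows "\<exists>r U. strict_mono r \<and> (\<forall>i j. (\<lambda>k. V (r k) i j) \<longlonglongrightarrow> U i j)"
proof -
  define P where "P = (\<lambda>p (s::nat \<Rightarrow> nat). convergent (\<lambda>k. V (s k) (fst (prod_decode p)) (snd (prod_decode p))))"
  interpret subseqs P
  proof
    fix p and s :: "nat \<Rightarrow> nat" assume "strict_mono s"
    obtain r where r: "strict_mono r" "convergent ((\<lambda>k. V (s k) (fst (prod_decode p)) (snd (prod_decode p))) \<circ> r)"
      using bounded_conv_subseq[of "\<lambda>k. V (s k) (fst (prod_decode p)) (snd (prod_decode p))"] bnd by blast
    show "\<exists>r'. strict_mono r' \<and> P p (s \<circ> r')"
      using r unfolding P_def by (intro exI[of _ r]) (simp add: o_def)
  qed
  have stable: "P n (s \<circ> r)" if "strict_mono r" "P n s" for r s n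
  proof -
    from that(2) obtain L where "(\<lambda>k. V (s k) (fst (prod_decode n)) (snd (prod_decode n))) \<longlonglongrightarrow> L"
      unfolding P_def convergent_def by blast
    from LIMSEQ_subseq_LIMSEQ[OF this that(1)] show ?thesis
      unfolding P_def convergent_def by (auto simp: o_def)
  qed
  have conv: "convergent (\<lambda>k. V (diagseq k) i j)" for i j
  proof -
    define p where "p = prod_encode (i, j)"
    have "P p (diagseq \<circ> ((+) (Suc p)))" by (rule diagseq_holds) (rule stable)
    hence "convergent (\<lambda>k. V (diagseq (k + Suc p)) i j)"
      unfolding P_def p_def by (simp add: o_def add.commute)
    thus ?thesis by (rule convergent_ignore_initial_segment[THEN iffD1])
  qed
  show ?thesis
    using subseq_diagseq conv unfolding convergent_def by metis
qed

lemma unitary_approximants: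
  assumes X: "supported_below S X" and Y: "supported_below S Y" and gram: "same_gram S X Y"
  shows "\<exists>V. (\<forall>n. V n \<in> M1) \<and>
    (\<forall>n a i. a < n \<longrightarrow> (\<Sum>m<S a. V n i m * X a m) = Y a i) \<and>
    (\<forall>n a i. a < n \<longrightarrow> (\<Sum>m<S a. cnj (V n m i) * Y a m) = X a i)"
proof -
  define M where "M n = (\<Sum>a<n. S a)" for n
  have SM: "S a \<le> M n" if "a < n" for a n
    unfolding M_def using that by (intro member_le_sum) auto
  have "\<exists>A. unitary_upto (M n) A \<and> (\<forall>a<n. \<forall>i<M n. mv (M n) A (X a) i = Y a i)" for n
  proof (rule unitary_extension, intro allI impI)
    fix a b assume "a < n" "b < n"
    thus "ip (M n) (Y a) (Y b) = ip (M n) (X a) (X b)"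
      using gram ip_truncate[OF X SM, of a n "X b"] ip_truncate[OF Y SM, of a n "Y b"]
      unfolding same_gram_def by simp
  qed
  then obtain A where A: "\<And>n. unitary_upto (M n) (A n)"
    and AX: "\<And>n a. a < n \<Longrightarrow> \<forall>i<M n. mv (M n) (A n) (X a) i = Y a i"
    by metis
  show ?thesis
    using embed_M1[OF A] embed_intertwines[OF A X Y SM AX]
    by (intro exI[of _ "\<lambda>n. embed (M n) (A n)"]) simp
qed

lemma intertwines_limit:
  assumes r: "strict_mono r" and lim: "\<And>i j. (\<lambda>k. V (r k) i j) \<longlonglongrightarrow> U i j"
    and eq1: "\<And>n a i. a < n \<Longrightarrow> (\<Sum>m<S a. V n i m * X a m) = Y a i"
    and eq2: "\<And>n a i. a < n \<Longrightarrow> (\<Sum>m<S a. cnj (V n m i) * Y a m) = X a i"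
  shows "intertwines S U X Y"
  unfolding intertwines_def
proof (intro allI conjI)
  fix a i
  have ev: "eventually (\<lambda>k. a < r k) sequentially"
  proof (rule eventually_sequentiallyI)
    fix k assume "Suc a \<le> k"
    thus "a < r k" using seq_suble[OF r, of k] by simp
  qed
  have "(\<lambda>k. \<Sum>m<S a. V (r k) i m * X a m) \<longlonglongrightarrow> Y a i"
    by (rule tendsto_eventually, rule eventually_mono[OF ev]) (rule eq1)
  moreover have "(\<lambda>k. \<Sum>m<S a. V (r k) i m * X a m) \<longlonglongrightarrow> (\<Sum>m<S a. U i m * X a m)"
    by (intro tendsto_intros lim)
  ultimately show "(\<Sum>m<S a. U i m * X a m) = Y a i" using LIMSEQ_unique by blast
  have "(\<lambda>k. \<Sum>m<S a. cnj (V (r k) m i) * Y a m) \<longlonglongrightarrow> X a i"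
    by (rule tendsto_eventually, rule eventually_mono[OF ev]) (rule eq2)
  moreover have "(\<lambda>k. \<Sum>m<S a. cnj (V (r k) m i) * Y a m) \<longlonglongrightarrow> (\<Sum>m<S a. cnj (U m i) * Y a m)"
    by (intro tendsto_intros lim)
  ultimately show "(\<Sum>m<S a. cnj (U m i) * Y a m) = X a i" using LIMSEQ_unique by blast
qed

text \<open>Conversely an intertwiner forces equal Gram matrices:
  <Y a, Y b> = <U X a, Y b> = <X a, U^* Y b> = <X a, X b>.\<close>
lemma intertwines_same_gram:
  assumes Y: "supported_below S Y" and U: "intertwines S U X Y"
  shows "same_gram S X Y"
  unfolding same_gram_def
proof (intro allI)
  fix a b
  let ?M = "S a + S b"
  have adj: "(\<Sum>i<?M. cnj (U i m) * Y b i) = X b m" for m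
  proof -
    have "(\<Sum>i<?M. cnj (U i m) * Y b i) = (\<Sum>i<S b. cnj (U i m) * Y b i)"
      using Y unfolding supported_below_def by (intro sum.mono_neutral_right) auto
    thus ?thesis using U unfolding intertwines_def by simp
  qed
  have "ip (S a) (Y a) (Y b) = ip ?M (Y a) (Y b)" by (rule ip_truncate[OF Y, symmetric]) simp
  also have "\<dots> = (\<Sum>i<?M. (\<Sum>m<S a. U i m * X a m) * cnj (Y b i))"
    using U unfolding ip_def intertwines_def by simp
  also have "\<dots> = (\<Sum>i<?M. \<Sum>m<S a. U i m * X a m * cnj (Y b i))"
    by (simp add: sum_distrib_right)
  also have "\<dots> = (\<Sum>m<S a. \<Sum>i<?M. U i m * X a m * cnj (Y b i))"
    by (rule sum.swap)
  also have "\<dots> = (\<Sum>m<S a. X a m * cnj (\<Sum>i<?M. cnj (U i m) * Y b i))"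
    by (simp add: sum_distrib_left mult_ac)
  also have "\<dots> = ip (S a) (X a) (X b)" by (simp add: adj ip_def)
  finally show "ip (S a) (X a) (X b) = ip (S a) (Y a) (Y b)" by simp
qed

theorem same_gram_iff_intertwines:
  assumes X: "supported_below S X" and Y: "supported_below S Y"
  shows "same_gram S X Y \<longleftrightarrow> (\<exists>U. U \<in> M0 \<and> weak_limit_M1 U \<and> intertwines S U X Y)"
proof
  assume "same_gram S X Y"
  from unitary_approximants[OF X Y this] obtain V where V: "\<forall>n. V n \<in> M1"
    and eq1: "\<forall>n a i. a < n \<longrightarrow> (\<Sum>m<S a. V n i m * X a m) = Y a i"
    and eq2: "\<forall>n a i. a < n \<longrightarrow> (\<Sum>m<S a. cnj (V n m i) * Y a m) = X a i"
    by blast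
  have V0: "V n \<in> M0" for n using V unfolding M1_def by blast
  hence "\<forall>n i j. cmod (V n i j) \<le> 1" using M0_entry by blast
  then obtain r U where r: "strict_mono r" and lim: "\<And>i j. (\<lambda>k. V (r k) i j) \<longlonglongrightarrow> U i j"
    using entrywise_convergent_subseq[of V] by blast
  have "U \<in> M0" by (rule M0_closed_entrywise[OF V0 lim])
  moreover have "weak_limit_M1 U"
    unfolding weak_limit_M1_def using V lim by (intro exI[of _ "\<lambda>k. V (r k)"]) simp
  moreover have "intertwines S U X Y"
    by (rule intertwines_limit[OF r lim]) (simp_all add: eq1 eq2)
  ultimately show "\<exists>U. U \<in> M0 \<and> weak_limit_M1 U \<and> intertwines S U X Y" by blast
qed (use intertwines_same_gram[OF Y] in blast)

theorem mainTheorem6: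
  fixes c :: "('n::{finite,linorder}) mi \<Rightarrow> 'n mi \<Rightarrow> complex"
    and h :: "'n fser"
    and a :: "'n mi \<Rightarrow> 'n mi \<Rightarrow> complex"
    and \<zeta> :: "'n \<Rightarrow> complex fps"
  assumes r_real: "\<forall>J K. c K J = cnj (c J K)"
    and r_zero: "c mi_zero mi_zero = 0"
    and dr_nonzero: "\<exists>i. c (mi_unit i) mi_zero \<noteq> 0 \<or> c mi_zero (mi_unit i) \<noteq> 0"
    and h_zero: "h mi_zero = 0"
    and decomp: "\<forall>J K. c J K = repr_coeff h a J K"
    and curve0: "\<forall>i. fps_nth (\<zeta> i) 0 = 0"
  shows "(\<forall>p q. pull_real \<zeta> c p q = 0) \<longleftrightarrow>
    (\<exists>U. U \<in> M0 \<and> weak_limit_M1 U \<and>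
       (\<forall>\<phi> \<in> fser_ideal ({h} \<union> range (fUg a U) \<union> range (Ufg a U)).
          pull_hol \<zeta> \<phi> = 0))"
proof -
  let ?S = "\<lambda>k. card (nz_deg_le k :: 'n mi set)"
  have "(\<forall>p q. pull_real \<zeta> c p q = 0) \<longleftrightarrow>
      pull_hol \<zeta> h = 0 \<and> same_gram ?S (gvec a \<zeta>) (fvec a \<zeta>)"
    by (rule pull_real_vanishes_iff[OF decomp h_zero])
  also have "\<dots> \<longleftrightarrow> pull_hol \<zeta> h = 0 \<and>
      (\<exists>U. U \<in> M0 \<and> weak_limit_M1 U \<and> intertwines ?S U (gvec a \<zeta>) (fvec a \<zeta>))"
    using same_gram_iff_intertwines[OF fvec_gvec_supported(2)[of a \<zeta>] fvec_gvec_supported(1)[of a \<zeta>]]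
    by simp
  also have "\<dots> \<longleftrightarrow> (\<exists>U. U \<in> M0 \<and> weak_limit_M1 U \<and>
      (\<forall>\<phi> \<in> fser_ideal ({h} \<union> range (fUg a U) \<union> range (Ufg a U)). pull_hol \<zeta> \<phi> = 0))"
    unfolding pull_hol_ideal_vanishes_iff[OF curve0] pull_generators_vanish_iff by blast
  finally show ?thesis .
qed

end
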